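(* Let $A=\bar A\times\bar B$ be a finite left brace of odd order with cyclic additive group and Z-group multiplicative group, with the notation of the context. Let $(a,b,c)$ and $(a',b',c')$ be elements of $A$ (with $a=(a_1,\dots,a_v)\in\bar A$, $b,b'\in B_{m+1}\times\dots\times B_r$, $c=(c_1,\dots,c_m)\in B_1\times\dots\times B_m$, and similarly for $a',c'$) each belonging to some transitive cycle base, and let $X_1$ (resp. $X_2$) be the uniconnected associated cycle set of $A$ built from $(a,b,c)$ (resp. $(a',b',c')$). Then $X_1\cong X_2$ if and only if (1) for every $j\in\{1,\dots,v\}$, $a'_j=(1+s_j)(1+q_j^{d_j}a''_j)a_j$ for some $s_j\in\mathrm{Soc}(A_j)$ and $a''_j\in A_j$; and (2) for every $j\in\{1,\dots,m\}$, $c'_j=(1+s_j)(1+p_j^{f_j}a''_j)c_j$ for some $s_j\in I_j$ and $a''_j\in B_j$, where the products are ring multiplications in $\mathbb{Z}/q_j^{\gamma_j}\mathbb{Z}$, resp. $\mathbb{Z}/p_j^{\beta_j}\mathbb{Z}$.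
   Context: A left brace is a set $A$ with $(A,+)$ abelian group, $(A,\circ)$ group, $a\circ(b+c)=a\circ b-a+a\circ c$; $\lambda_a(b):=-a+a\circ b$, $\mathrm{Soc}(A)=\{a\mid\lambda_a=\mathrm{id}\}$. A trivial left brace has $a\circ b=a+b$. A Z-group is a finite group with all Sylow subgroups cyclic. A transitive cycle base is a single orbit of the action $\lambda$ of $(A,\circ)$ generating $(A,+)$; the uniconnected associated cycle set built from $g$ is $(A,\bullet)$, $x\bullet y:=\lambda_x(g)^{-}\circ y$. Decomposition: integers $v,m,r\ge0$, $m\le r$; distinct odd primes $q_1,\dots,q_v,p_1,\dots,p_r$, $p_1<\dots<p_r$; left braces $A_i$, $B_j$ with cyclic additive groups, $|A_i|=q_i^{\gamma_i}$, $|B_j|=p_j^{\beta_j}$, $B_{m+1},\dots,B_r$ trivial; each such prime-power brace is identified with a brace on $\mathbb{Z}/p^k\mathbb{Z}$ (usual addition) with $x\circ y=x+y+p^t xy$ for some $1\le t\le k$, so ring multiplication is available. $\alpha:(B_1\times\dots\times B_m,\circ)\to\mathrm{Aut}(B_{m+1}\times\dots\times B_r,+)$ is a homomorphism nontrivial on each $B_i$ ($i\le m$) whose image acts nontrivially on each $B_i$ ($i>m$); $A=\bar A\times\bar B$ with $\bar A=A_1\times\dots\times A_v$ and $\bar B=(B_{m+1}\times\dots\times B_r)\rtimes_\alpha(B_1\times\dots\times B_m)$ (additive group direct product, $(x,y)\circ(x',y')=(x\circ\alpha(y)(x'),y\circ y')$). $|\mathrm{Soc}(A_i)|=q_i^{d_i}$,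 $|\mathrm{Soc}(B_j)|=p_j^{f_j}$, $I_j:=\mathrm{Soc}(B_j)\cap\ker\alpha$ ($j\le m$). *)

theory Defs
  imports "HOL-Computational_Algebra.Primes"
begin

definition lam :: "('e \<Rightarrow> 'e \<Rightarrow> 'e) \<Rightarrow> ('e \<Rightarrow> 'e) \<Rightarrow> ('e \<Rightarrow> 'e \<Rightarrow> 'e) \<Rightarrow> 'e \<Rightarrow> 'e \<Rightarrow> 'e" where
  "lam add neg circ x y = add (neg x) (circ x y)"

definition circ_inv :: "'e set \<Rightarrow> ('e \<Rightarrow> 'e \<Rightarrow> 'e) \<Rightarrow> 'e \<Rightarrow> 'e \<Rightarrow> 'e" where
  "circ_inv Car circ zero x = (THE y. y \<in> Car \<and> circ x y = zero)"

inductive_set add_gen :: "('e \<Rightarrow> 'e \<Rightarrow> 'e) \<Rightarrow> ('e \<Rightarrow> 'e) \<Rightarrow> 'e \<Rightarrow> 'e set \<Rightarrow> 'e set"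
  for add neg zero S where
  zero: "zero \<in> add_gen add neg zero S"
| base: "s \<in> S \<Longrightarrow> s \<in> add_gen add neg zero S"
| plus: "x \<in> add_gen add neg zero S \<Longrightarrow> y \<in> add_gen add neg zero S \<Longrightarrow> add x y \<in> add_gen add neg zero S"
| uminus: "x \<in> add_gen add neg zero S \<Longrightarrow> neg x \<in> add_gen add neg zero S"

definition lam_orbit :: "'e set \<Rightarrow> ('e \<Rightarrow> 'e \<Rightarrow> 'e) \<Rightarrow> ('e \<Rightarrow> 'e) \<Rightarrow> ('e \<Rightarrow> 'e \<Rightarrow> 'e) \<Rightarrow> 'e \<Rightarrow> 'e set" where
  "lam_orbit Car add neg circ h = {lam add neg circ x h | x. x \<in> Car}"

definition transitive_cycle_base ::
  "'e set \<Rightarrow> ('e \<Rightarrow> 'e \<Rightarrow> 'e) \<Rightarrow> ('e \<Rightarrow> 'e) \<Rightarrow> 'e \<Rightarrow> ('e \<Rightarrow> 'e \<Rightarrow> 'e) \<Rightarrow> 'e set \<Rightarrow> bool" where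
  "transitive_cycle_base Car add neg zero circ T \<longleftrightarrow>
     (\<exists>h\<in>Car. T = lam_orbit Car add neg circ h) \<and> add_gen add neg zero T = Car"

definition uc_cycle_op ::
  "'e set \<Rightarrow> ('e \<Rightarrow> 'e \<Rightarrow> 'e) \<Rightarrow> ('e \<Rightarrow> 'e) \<Rightarrow> 'e \<Rightarrow> ('e \<Rightarrow> 'e \<Rightarrow> 'e) \<Rightarrow> 'e \<Rightarrow> 'e \<Rightarrow> 'e \<Rightarrow> 'e" where
  "uc_cycle_op Car add neg zero circ g x y =
     circ (circ_inv Car circ zero (lam add neg circ x g)) y"

definition cycle_set_iso :: "'e set \<Rightarrow> ('e \<Rightarrow> 'e \<Rightarrow> 'e) \<Rightarrow> ('e \<Rightarrow> 'e \<Rightarrow> 'e) \<Rightarrow> bool" where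
  "cycle_set_iso Car op1 op2 \<longleftrightarrow>
     (\<exists>f. bij_betw f Car Car \<and> (\<forall>x\<in>Car. \<forall>y\<in>Car. f (op1 x y) = op2 (f x) (f y)))"

definition tup_car :: "nat set \<Rightarrow> (nat \<Rightarrow> nat) \<Rightarrow> (nat \<Rightarrow> int) set" where
  "tup_car I N = {x. (\<forall>i\<in>I. 0 \<le> x i \<and> x i < int (N i)) \<and> (\<forall>i. i \<notin> I \<longrightarrow> x i = 0)}"

definition tup_add :: "nat set \<Rightarrow> (nat \<Rightarrow> nat) \<Rightarrow> (nat \<Rightarrow> int) \<Rightarrow> (nat \<Rightarrow> int) \<Rightarrow> (nat \<Rightarrow> int)" where
  "tup_add I N x y = (\<lambda>i. if i \<in> I then (x i + y i) mod int (N i) else 0)"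

definition tup_neg :: "nat set \<Rightarrow> (nat \<Rightarrow> nat) \<Rightarrow> (nat \<Rightarrow> int) \<Rightarrow> (nat \<Rightarrow> int)" where
  "tup_neg I N x = (\<lambda>i. if i \<in> I then (- x i) mod int (N i) else 0)"

text \<open>Componentwise brace x \<circ> y = x + y + E_i x y on Z/N_i Z (E_i = p_i^t_i).\<close>
definition tup_circ :: "nat set \<Rightarrow> (nat \<Rightarrow> nat) \<Rightarrow> (nat \<Rightarrow> nat) \<Rightarrow> (nat \<Rightarrow> int) \<Rightarrow> (nat \<Rightarrow> int) \<Rightarrow> (nat \<Rightarrow> int)" where
  "tup_circ I N E x y = (\<lambda>i. if i \<in> I then (x i + y i + int (E i) * x i * y i) mod int (N i) else 0)"

definition emb :: "nat \<Rightarrow> int \<Rightarrow> (nat \<Rightarrow> int)" where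
  "emb j s = (\<lambda>i. if i = j then s else 0)"

definition soc1 :: "nat \<Rightarrow> nat \<Rightarrow> int set" where
  "soc1 N E = {x \<in> {0..<int N}. \<forall>y\<in>{0..<int N}. (- x + (x + y + int E * x * y)) mod int N = y}"

definition add_aut :: "nat set \<Rightarrow> (nat \<Rightarrow> nat) \<Rightarrow> ((nat \<Rightarrow> int) \<Rightarrow> (nat \<Rightarrow> int)) \<Rightarrow> bool" where
  "add_aut I N \<phi> \<longleftrightarrow> bij_betw \<phi> (tup_car I N) (tup_car I N) \<and>
     (\<forall>x\<in>tup_car I N. \<forall>y\<in>tup_car I N. \<phi> (tup_add I N x y) = tup_add I N (\<phi> x) (\<phi> y))"

text \<open>NA i = q_i^gamma_i, EA i = q_i^(t of A_i), NB j = p_j^beta_j, EB j = p_j^(t of B_j).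
  The braces B_{m+1},...,B_r are trivial, so their multiplication is addition.\<close>

type_synonym belt = "(nat \<Rightarrow> int) \<times> (nat \<Rightarrow> int) \<times> (nat \<Rightarrow> int)"

definition br_car :: "nat \<Rightarrow> nat \<Rightarrow> nat \<Rightarrow> (nat \<Rightarrow> nat) \<Rightarrow> (nat \<Rightarrow> nat) \<Rightarrow> belt set" where
  "br_car v m r NA NB = tup_car {1..v} NA \<times> tup_car {m+1..r} NB \<times> tup_car {1..m} NB"

definition br_zero :: belt where
  "br_zero = (\<lambda>_. 0, \<lambda>_. 0, \<lambda>_. 0)"

definition br_add :: "nat \<Rightarrow> nat \<Rightarrow> nat \<Rightarrow> (nat \<Rightarrow> nat) \<Rightarrow> (nat \<Rightarrow> nat) \<Rightarrow> belt \<Rightarrow> belt \<Rightarrow> belt" where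
  "br_add v m r NA NB = (\<lambda>(a,b,c) (a',b',c').
     (tup_add {1..v} NA a a', tup_add {m+1..r} NB b b', tup_add {1..m} NB c c'))"

definition br_neg :: "nat \<Rightarrow> nat \<Rightarrow> nat \<Rightarrow> (nat \<Rightarrow> nat) \<Rightarrow> (nat \<Rightarrow> nat) \<Rightarrow> belt \<Rightarrow> belt" where
  "br_neg v m r NA NB = (\<lambda>(a,b,c).
     (tup_neg {1..v} NA a, tup_neg {m+1..r} NB b, tup_neg {1..m} NB c))"

definition br_circ :: "nat \<Rightarrow> nat \<Rightarrow> nat \<Rightarrow> (nat \<Rightarrow> nat) \<Rightarrow> (nat \<Rightarrow> nat) \<Rightarrow> (nat \<Rightarrow> nat) \<Rightarrow> (nat \<Rightarrow> nat)
     \<Rightarrow> ((nat \<Rightarrow> int) \<Rightarrow> (nat \<Rightarrow> int) \<Rightarrow> (nat \<Rightarrow> int)) \<Rightarrow> belt \<Rightarrow> belt \<Rightarrow> belt" where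
  "br_circ v m r NA EA NB EB \<alpha> = (\<lambda>(a,b,c) (a',b',c').
     (tup_circ {1..v} NA EA a a', tup_add {m+1..r} NB b (\<alpha> c b'), tup_circ {1..m} NB EB c c'))"

end

theory Submission
  imports Defs "HOL-Number_Theory.Cong"
begin

text \<open>An isomorphism \<open>f : X\<^sub>1 \<cong> X\<^sub>2\<close>, normalised to \<open>\<phi> x = f x \<circ> f(0)\<^sup>-\<close>, intertwines left
  multiplication by the generators \<open>\<lambda>\<^sub>x(g)\<^sup>-\<close> of \<open>(A, \<circ>)\<close>, hence is a \<open>\<circ>\<close>-automorphism; it also
  commutes with \<open>\<lambda>\<close> on the orbit of \<open>g\<close>, which generates \<open>(A, +)\<close>, so it is a brace automorphism
  with \<open>\<phi>(g) \<in> \<lambda>\<^sub>A(g')\<close>; conversely such automorphisms give isomorphisms.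
  As \<open>(A, +)\<close> is cyclic, a brace automorphism is multiplication by an integer \<open>k\<close>. Compatibility with
  \<open>\<circ>\<close> puts \<open>k - 1\<close> into the socle of each \<open>A\<^sub>j\<close> and of each \<open>B\<^sub>j\<close>, \<open>j \<le> m\<close>, and there also into
  \<open>ker \<alpha>\<close>; reading off \<open>g' = \<lambda>\<^sub>w(k g)\<close> coordinatewise gives (1) and (2). Conversely, multiplying by
  \<open>1 + s\<^sub>j\<close> on these factors and by suitable units on \<open>B\<^sub>m\<^sub>+\<^sub>1, \<dots>, B\<^sub>r\<close> is a brace automorphism
  sending \<open>\<lambda>\<^sub>z(g)\<close> to \<open>g'\<close>, with \<open>z\<close> built from the \<open>a''\<^sub>j\<close>.\<close>

section \<open>Brace automorphisms and isomorphisms of uniconnected cycle sets\<close>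

lemma cycle_set_iso_trans:
  assumes "cycle_set_iso C op1 op2" and "cycle_set_iso C op2 op3"
  shows "cycle_set_iso C op1 op3"
proof -
  obtain f1 where f1: "bij_betw f1 C C" "\<forall>x\<in>C. \<forall>y\<in>C. f1 (op1 x y) = op2 (f1 x) (f1 y)"
    using assms(1) unfolding cycle_set_iso_def by blast
  obtain f2 where f2: "bij_betw f2 C C" "\<forall>x\<in>C. \<forall>y\<in>C. f2 (op2 x y) = op3 (f2 x) (f2 y)"
    using assms(2) unfolding cycle_set_iso_def by blast
  have "f1 x \<in> C" if "x \<in> C" for x
    using f1(1) that bij_betwE by blast
  then have "\<forall>x\<in>C. \<forall>y\<in>C. (f2 \<circ> f1) (op1 x y) = op3 ((f2 \<circ> f1) x) ((f2 \<circ> f1) y)"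
    using f1(2) f2(2) by simp
  moreover have "bij_betw (f2 \<circ> f1) C C"
    using f1(1) f2(1) by (rule bij_betw_trans)
  ultimately show ?thesis
    unfolding cycle_set_iso_def by blast
qed

inductive_set circ_span :: "('e \<Rightarrow> 'e \<Rightarrow> 'e) \<Rightarrow> 'e \<Rightarrow> 'e set \<Rightarrow> 'e set"
  for circ zero S where
  zero: "zero \<in> circ_span circ zero S"
| base: "s \<in> S \<Longrightarrow> s \<in> circ_span circ zero S"
| mult: "x \<in> circ_span circ zero S \<Longrightarrow> y \<in> circ_span circ zero S \<Longrightarrow> circ x y \<in> circ_span circ zero S"

inductive_set add_span :: "('e \<Rightarrow> 'e \<Rightarrow> 'e) \<Rightarrow> 'e \<Rightarrow> 'e set \<Rightarrow> 'e set"
  for add zero S where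
  zero: "zero \<in> add_span add zero S"
| base: "s \<in> S \<Longrightarrow> s \<in> add_span add zero S"
| plus: "x \<in> add_span add zero S \<Longrightarrow> y \<in> add_span add zero S \<Longrightarrow> add x y \<in> add_span add zero S"

text \<open>Assumption \<open>neg_funpow\<close> (finite additive exponent, true for every finite brace) lets
  additive subgroups be generated without negation.\<close>

locale left_brace =
  fixes C :: "'e set" and add :: "'e \<Rightarrow> 'e \<Rightarrow> 'e" and neg :: "'e \<Rightarrow> 'e" and zero :: 'e
    and circ :: "'e \<Rightarrow> 'e \<Rightarrow> 'e"
  assumes add_closed: "x \<in> C \<Longrightarrow> y \<in> C \<Longrightarrow> add x y \<in> C"
    and neg_closed: "x \<in> C \<Longrightarrow> neg x \<in> C"
    and zero_closed: "zero \<in> C"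
    and add_assoc: "x \<in> C \<Longrightarrow> y \<in> C \<Longrightarrow> w \<in> C \<Longrightarrow> add (add x y) w = add x (add y w)"
    and add_commute: "x \<in> C \<Longrightarrow> y \<in> C \<Longrightarrow> add x y = add y x"
    and add_zero: "x \<in> C \<Longrightarrow> add x zero = x"
    and add_neg: "x \<in> C \<Longrightarrow> add x (neg x) = zero"
    and circ_closed: "x \<in> C \<Longrightarrow> y \<in> C \<Longrightarrow> circ x y \<in> C"
    and circ_assoc: "x \<in> C \<Longrightarrow> y \<in> C \<Longrightarrow> w \<in> C \<Longrightarrow> circ (circ x y) w = circ x (circ y w)"
    and circ_zero: "x \<in> C \<Longrightarrow> circ x zero = x"
    and zero_circ: "x \<in> C \<Longrightarrow> circ zero x = x"
    and circ_inverse_ex: "x \<in> C \<Longrightarrow> \<exists>y\<in>C. circ x y = zero \<and> circ y x = zero"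
    and circ_add_distrib: "x \<in> C \<Longrightarrow> y \<in> C \<Longrightarrow> w \<in> C \<Longrightarrow>
        circ x (add y w) = add (add (circ x y) (neg x)) (circ x w)"
    and neg_funpow: "\<exists>K. \<forall>x\<in>C. neg x = (add x ^^ K) zero"
begin

abbreviation "lmap \<equiv> lam add neg circ"
abbreviation "cinv \<equiv> circ_inv C circ zero"
abbreviation "cyc \<equiv> uc_cycle_op C add neg zero circ"

definition brace_aut :: "('e \<Rightarrow> 'e) \<Rightarrow> bool" where
  "brace_aut \<phi> \<longleftrightarrow> bij_betw \<phi> C C \<and> (\<forall>x\<in>C. \<forall>y\<in>C. \<phi> (add x y) = add (\<phi> x) (\<phi> y))
     \<and> (\<forall>x\<in>C. \<forall>y\<in>C. \<phi> (circ x y) = circ (\<phi> x) (\<phi> y))"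

lemma zero_add: "x \<in> C \<Longrightarrow> add zero x = x"
  using add_commute add_zero zero_closed by metis

lemma add_left_cancel: assumes "x \<in> C" "y \<in> C" "w \<in> C" "add x y = add x w" shows "y = w"
proof -
  have "add (neg x) (add x y) = add (neg x) (add x w)"
    using assms by simp
  then show ?thesis
    using assms add_assoc[of "neg x" x] neg_closed add_neg add_commute zero_add by metis
qed

lemma additive_zero:
  assumes "\<forall>x\<in>C. f x \<in> C" "\<forall>x\<in>C. \<forall>y\<in>C. f (add x y) = add (f x) (f y)"
  shows "f zero = zero"
proof -
  have "add (f zero) (f zero) = add (f zero) zero"
    using assms zero_closed add_zero by metis
  then show ?thesis
    using add_left_cancel assms(1) zero_closed by blast
qed

lemma neg_unique: "x \<in> C \<Longrightarrow> y \<in> C \<Longrightarrow> add x y = zero \<Longrightarrow> y = neg x"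
  using add_left_cancel[of x y "neg x"] add_neg neg_closed by metis

lemma neg_zero: "neg zero = zero"
  using neg_unique[of zero zero] zero_closed add_zero by metis

lemma cinv: assumes "x \<in> C" shows "cinv x \<in> C" "circ x (cinv x) = zero" "circ (cinv x) x = zero"
proof -
  obtain y where y: "y \<in> C" "circ x y = zero" "circ y x = zero"
    using circ_inverse_ex[OF assms] by blast
  have "y' = y" if "y' \<in> C" "circ x y' = zero" for y'
  proof -
    have "y' = circ (circ y x) y'" using y that zero_circ by simp
    also have "\<dots> = circ y (circ x y')" using circ_assoc y that assms by blast
    also have "\<dots> = y" using that y circ_zero by simp
    finally show ?thesis .
  qed
  then have "cinv x = y"
    unfolding circ_inv_def using y by blast
  then show "cinv x \<in> C" "circ x (cinv x) = zero" "circ (cinv x) x = zero"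
    using y by simp_all
qed

lemma circ_left_cancel: assumes "x \<in> C" "y \<in> C" "w \<in> C" "circ x y = circ x w" shows "y = w"
proof -
  have "circ (cinv x) (circ x y) = circ (cinv x) (circ x w)"
    using assms by simp
  then show ?thesis
    using assms circ_assoc[of "cinv x" x] cinv zero_circ by metis
qed

lemma circ_right_cancel: assumes "x \<in> C" "y \<in> C" "w \<in> C" "circ y x = circ w x" shows "y = w"
proof -
  have "circ (circ y x) (cinv x) = circ (circ w x) (cinv x)"
    using assms by simp
  then show ?thesis
    using assms circ_assoc[of _ x "cinv x"] cinv circ_zero by metis
qed

lemma cinv_unique: "x \<in> C \<Longrightarrow> y \<in> C \<Longrightarrow> circ x y = zero \<Longrightarrow> y = cinv x"
  using circ_left_cancel[of x y "cinv x"] cinv by metis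

lemma cinv_cinv: "x \<in> C \<Longrightarrow> cinv (cinv x) = x"
  using cinv_unique[of "cinv x" x] cinv by metis

lemma lmap_closed: "x \<in> C \<Longrightarrow> y \<in> C \<Longrightarrow> lmap x y \<in> C"
  unfolding lam_def by (simp add: add_closed neg_closed circ_closed)

lemma circ_eq_add_lmap: assumes "x \<in> C" "y \<in> C" shows "circ x y = add x (lmap x y)"
proof -
  have "add x (lmap x y) = add (add x (neg x)) (circ x y)"
    unfolding lam_def using assms add_assoc neg_closed circ_closed by simp
  then show ?thesis
    using assms add_neg zero_add circ_closed by simp
qed

lemma lmap_add: assumes "x \<in> C" "y \<in> C" "w \<in> C"
  shows "lmap x (add y w) = add (lmap x y) (lmap x w)"
proof -
  have "neg x \<in> C" "circ x y \<in> C" "circ x w \<in> C"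
    using assms neg_closed circ_closed by auto
  then have "add (neg x) (add (add (circ x y) (neg x)) (circ x w))
      = add (add (neg x) (circ x y)) (add (neg x) (circ x w))"
    using add_assoc add_commute add_closed by metis
  then show ?thesis
    unfolding lam_def using circ_add_distrib assms by simp
qed

lemma lmap_zero: assumes "x \<in> C" shows "lmap x zero = zero"
proof -
  have "add (lmap x zero) zero = add (lmap x zero) (lmap x zero)"
    using lmap_add[OF assms zero_closed zero_closed] add_zero zero_closed lmap_closed assms by simp
  then show ?thesis
    using add_left_cancel lmap_closed assms zero_closed by metis
qed

lemma zero_lmap: "y \<in> C \<Longrightarrow> lmap zero y = y"
  unfolding lam_def using neg_zero zero_circ zero_add by simp

lemma lmap_circ: assumes "x \<in> C" "y \<in> C" "w \<in> C"
  shows "lmap (circ x y) w = lmap x (lmap y w)"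
proof -
  have xy: "circ x y \<in> C"
    using assms circ_closed by auto
  have "circ (circ x y) w = circ x (add y (lmap y w))"
    using circ_assoc assms circ_eq_add_lmap by simp
  also have "\<dots> = add (add (circ x y) (neg x)) (add x (lmap x (lmap y w)))"
    using circ_add_distrib circ_eq_add_lmap assms lmap_closed by simp
  also have "\<dots> = add (circ x y) (lmap x (lmap y w))"
    using add_assoc assms xy neg_closed lmap_closed add_neg add_commute zero_add add_closed by metis
  finally have "add (circ x y) (lmap (circ x y) w) = add (circ x y) (lmap x (lmap y w))"
    using circ_eq_add_lmap xy assms by simp
  then show ?thesis
    using add_left_cancel xy lmap_closed assms by metis
qed

lemma lmap_cinv_lmap: "x \<in> C \<Longrightarrow> y \<in> C \<Longrightarrow> lmap (cinv x) (lmap x y) = y"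
  using lmap_circ[of "cinv x" x y] cinv zero_lmap by metis

lemma lmap_lmap_cinv: "x \<in> C \<Longrightarrow> y \<in> C \<Longrightarrow> lmap x (lmap (cinv x) y) = y"
  using lmap_circ[of x "cinv x" y] cinv zero_lmap by metis

lemma add_eq_circ_lmap: "x \<in> C \<Longrightarrow> y \<in> C \<Longrightarrow> add x y = circ x (lmap (cinv x) y)"
  using circ_eq_add_lmap[of x "lmap (cinv x) y"] lmap_lmap_cinv lmap_closed cinv by metis

lemma brace_aut_closed: "brace_aut \<phi> \<Longrightarrow> x \<in> C \<Longrightarrow> \<phi> x \<in> C"
  unfolding brace_aut_def bij_betw_def by auto

lemma brace_aut_zero: assumes "brace_aut \<phi>" shows "\<phi> zero = zero"
proof -
  have "circ (\<phi> zero) (\<phi> zero) = circ (\<phi> zero) zero"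
    using assms zero_closed circ_zero brace_aut_closed unfolding brace_aut_def by metis
  then show ?thesis
    using circ_left_cancel brace_aut_closed[OF assms] zero_closed by metis
qed

lemma brace_aut_neg: assumes "brace_aut \<phi>" "x \<in> C" shows "\<phi> (neg x) = neg (\<phi> x)"
proof -
  have "add (\<phi> x) (\<phi> (neg x)) = zero"
    using assms brace_aut_zero add_neg neg_closed unfolding brace_aut_def by metis
  then show ?thesis
    using neg_unique brace_aut_closed assms neg_closed by metis
qed

lemma brace_aut_cinv: assumes "brace_aut \<phi>" "x \<in> C" shows "\<phi> (cinv x) = cinv (\<phi> x)"
proof -
  have "circ (\<phi> x) (\<phi> (cinv x)) = zero"
    using assms brace_aut_zero cinv unfolding brace_aut_def by metis
  then show ?thesis
    using cinv_unique brace_aut_closed assms cinv by metis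
qed

lemma brace_aut_lmap:
  assumes "brace_aut \<phi>" "x \<in> C" "y \<in> C"
  shows "\<phi> (lmap x y) = lmap (\<phi> x) (\<phi> y)"
proof -
  have "\<phi> (lmap x y) = add (\<phi> (neg x)) (\<phi> (circ x y))"
    using assms neg_closed circ_closed unfolding lam_def brace_aut_def by blast
  then show ?thesis
    using assms brace_aut_neg unfolding lam_def brace_aut_def by simp
qed

lemma cycle_set_iso_brace_aut:
  assumes "brace_aut \<psi>" "g \<in> C"
  shows "cycle_set_iso C (cyc g) (cyc (\<psi> g))"
  unfolding cycle_set_iso_def
proof (intro exI[of _ \<psi>] conjI ballI)
  show "bij_betw \<psi> C C"
    using assms unfolding brace_aut_def by auto
  fix x y assume "x \<in> C" "y \<in> C"
  then have "\<psi> (circ (cinv (lmap x g)) y) = circ (\<psi> (cinv (lmap x g))) (\<psi> y)"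
    using assms lmap_closed cinv unfolding brace_aut_def by simp
  also have "\<dots> = circ (cinv (lmap (\<psi> x) (\<psi> g))) (\<psi> y)"
    using brace_aut_cinv brace_aut_lmap assms \<open>x \<in> C\<close> lmap_closed by simp
  finally show "\<psi> (cyc g x y) = cyc (\<psi> g) (\<psi> x) (\<psi> y)"
    unfolding uc_cycle_op_def .
qed

lemma cycle_set_iso_lmap:
  assumes "w \<in> C" "g \<in> C"
  shows "cycle_set_iso C (cyc g) (cyc (lmap w g))"
  unfolding cycle_set_iso_def
proof (intro exI[of _ "\<lambda>x. circ x (cinv w)"] conjI ballI)
  show "bij_betw (\<lambda>x. circ x (cinv w)) C C"
    by (rule bij_betw_byWitness[where f'="\<lambda>x. circ x w"])
      (use circ_assoc assms cinv circ_zero circ_closed in auto)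
  fix x y assume "x \<in> C" "y \<in> C"
  have "lmap (circ x (cinv w)) (lmap w g) = lmap x (lmap (cinv w) (lmap w g))"
    using lmap_circ \<open>x \<in> C\<close> assms cinv lmap_closed by simp
  also have "\<dots> = lmap x g"
    using lmap_cinv_lmap assms by simp
  finally have "lmap (circ x (cinv w)) (lmap w g) = lmap x g" .
  then show "circ (cyc g x y) (cinv w) = cyc (lmap w g) (circ x (cinv w)) (circ y (cinv w))"
    unfolding uc_cycle_op_def using circ_assoc \<open>x \<in> C\<close> \<open>y \<in> C\<close> cinv lmap_closed assms by simp
qed

lemma transitive_cycle_base_orbit:
  assumes "transitive_cycle_base C add neg zero circ T" "g \<in> T"
  shows "g \<in> C" "T = {lmap x g | x. x \<in> C}"
proof -
  obtain h where h: "h \<in> C" "T = lam_orbit C add neg circ h"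
    using assms(1) unfolding transitive_cycle_base_def by blast
  obtain x0 where x0: "x0 \<in> C" "g = lmap x0 h"
    using assms(2) h unfolding lam_orbit_def by blast
  then show g: "g \<in> C"
    using h lmap_closed by simp
  have "lmap x h = lmap (circ x (cinv x0)) g" if "x \<in> C" for x
    using lmap_circ lmap_cinv_lmap that x0 h g cinv by simp
  moreover have "lmap x g = lmap (circ x x0) h" if "x \<in> C" for x
    using lmap_circ x0 h that by simp
  ultimately show "T = {lmap x g | x. x \<in> C}"
    unfolding h lam_orbit_def using circ_closed cinv x0 by blast
qed

lemma add_span_closed: assumes "S \<subseteq> C" "x \<in> add_span add zero S" shows "x \<in> C"
  using assms(2) by (induction x rule: add_span.induct) (use assms(1) in \<open>auto simp: zero_closed add_closed\<close>)

lemma add_gen_subset_add_span: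
  assumes "S \<subseteq> C"
  shows "add_gen add neg zero S \<subseteq> add_span add zero S"
proof
  obtain K where K: "\<forall>x\<in>C. neg x = (add x ^^ K) zero"
    using neg_funpow by blast
  have multiple: "(add x ^^ n) zero \<in> add_span add zero S" if "x \<in> add_span add zero S" for x n
    by (induction n) (auto intro: add_span.intros that)
  fix x assume "x \<in> add_gen add neg zero S"
  then show "x \<in> add_span add zero S"
  proof (induction x rule: add_gen.induct)
    case (uminus x)
    then show ?case
      using K add_span_closed[OF assms] multiple by metis
  qed (auto intro: add_span.intros)
qed

lemma lmap_add_span_subset_circ_span:
  assumes "S \<subseteq> C" and invariant: "\<forall>x\<in>C. \<forall>s\<in>S. lmap x s \<in> S"
    and "y \<in> add_span add zero S"
  shows "\<forall>x\<in>C. lmap x y \<in> circ_span circ zero S"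
  using assms(3)
proof (induction y rule: add_span.induct)
  case zero
  then show ?case
    using lmap_zero by (auto intro: circ_span.intros)
next
  case (base s)
  then show ?case
    using invariant by (auto intro: circ_span.intros)
next
  case (plus y w)
  have y: "y \<in> C" and w: "w \<in> C"
    using plus add_span_closed assms(1) by auto
  show ?case
  proof
    fix x assume x: "x \<in> C"
    have xy: "lmap x y \<in> C"
      using lmap_closed x y by auto
    have "lmap x (add y w) = circ (lmap x y) (lmap (cinv (lmap x y)) (lmap x w))"
      using lmap_add add_eq_circ_lmap x y w xy lmap_closed by simp
    also have "\<dots> = circ (lmap x y) (lmap (circ (cinv (lmap x y)) x) w)"
      using lmap_circ cinv xy x w by simp
    finally show "lmap x (add y w) \<in> circ_span circ zero S"
      using plus.IH x circ_closed cinv xy by (auto intro: circ_span.mult)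
  qed
qed

lemma transitive_cycle_base_circ_span:
  assumes "transitive_cycle_base C add neg zero circ T"
  shows "C \<subseteq> circ_span circ zero T"
proof
  fix y assume y: "y \<in> C"
  obtain g where "g \<in> T"
    using assms zero_closed unfolding transitive_cycle_base_def lam_orbit_def by blast
  then have T: "T = {lmap x g | x. x \<in> C}" and g: "g \<in> C"
    using transitive_cycle_base_orbit assms by auto
  have "T \<subseteq> C"
    using T g lmap_closed by auto
  moreover have "\<forall>x\<in>C. \<forall>t\<in>T. lmap x t \<in> T"
    unfolding T using lmap_circ g circ_closed by auto (metis circ_closed)
  moreover have "y \<in> add_span add zero T"
    using add_gen_subset_add_span \<open>T \<subseteq> C\<close> assms y unfolding transitive_cycle_base_def by auto
  ultimately have "lmap zero y \<in> circ_span circ zero T"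
    using lmap_add_span_subset_circ_span zero_closed by blast
  then show "y \<in> circ_span circ zero T"
    using zero_lmap y by simp
qed

lemma cycle_set_iso_brace_aut_lmap:
  assumes "brace_aut \<psi>" "z \<in> C" "g \<in> C"
  shows "cycle_set_iso C (cyc g) (cyc (\<psi> (lmap z g)))"
  using cycle_set_iso_trans cycle_set_iso_lmap[OF assms(2,3)]
    cycle_set_iso_brace_aut[OF assms(1) lmap_closed[OF assms(2,3)]] by blast

lemma circ_hom_zero:
  assumes closed: "\<forall>x\<in>C. \<phi> x \<in> C" and hom: "\<forall>x\<in>C. \<forall>y\<in>C. \<phi> (circ x y) = circ (\<phi> x) (\<phi> y)"
  shows "\<phi> zero = zero"
proof -
  have "circ (\<phi> zero) (\<phi> zero) = circ (\<phi> zero) zero"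
    using hom zero_closed closed circ_zero by metis
  then show ?thesis
    using circ_left_cancel closed zero_closed by metis
qed

lemma circ_hom_cinv:
  assumes closed: "\<forall>x\<in>C. \<phi> x \<in> C" and hom: "\<forall>x\<in>C. \<forall>y\<in>C. \<phi> (circ x y) = circ (\<phi> x) (\<phi> y)"
    and "x \<in> C"
  shows "\<phi> (cinv x) = cinv (\<phi> x)"
proof -
  have "circ (\<phi> x) (\<phi> (cinv x)) = zero"
    using hom[rule_format, of x "cinv x"] circ_hom_zero[OF closed hom] cinv \<open>x \<in> C\<close> by simp
  then show ?thesis
    using cinv_unique closed cinv \<open>x \<in> C\<close> by blast
qed

definition lmap_equivariant :: "('e \<Rightarrow> 'e) \<Rightarrow> 'e \<Rightarrow> bool" where
  "lmap_equivariant \<phi> w \<longleftrightarrow> w \<in> C \<and> (\<forall>x\<in>C. \<phi> (lmap x w) = lmap (\<phi> x) (\<phi> w))"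

lemma lmap_equivariant_lmap:
  assumes closed: "\<forall>x\<in>C. \<phi> x \<in> C" and hom: "\<forall>x\<in>C. \<forall>y\<in>C. \<phi> (circ x y) = circ (\<phi> x) (\<phi> y)"
    and w: "lmap_equivariant \<phi> w" and "y \<in> C"
  shows "lmap_equivariant \<phi> (lmap y w)"
  unfolding lmap_equivariant_def
proof (intro conjI ballI)
  show "lmap y w \<in> C"
    using w \<open>y \<in> C\<close> lmap_closed unfolding lmap_equivariant_def by blast
  fix x assume "x \<in> C"
  then have "\<phi> (lmap x (lmap y w)) = \<phi> (lmap (circ x y) w)"
    using w \<open>y \<in> C\<close> lmap_circ unfolding lmap_equivariant_def by simp
  also have "\<dots> = lmap (\<phi> (circ x y)) (\<phi> w)"
    using w \<open>x \<in> C\<close> \<open>y \<in> C\<close> circ_closed unfolding lmap_equivariant_def by simp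
  also have "\<dots> = lmap (\<phi> x) (\<phi> (lmap y w))"
    using w \<open>x \<in> C\<close> \<open>y \<in> C\<close> hom closed lmap_circ unfolding lmap_equivariant_def by simp
  finally show "\<phi> (lmap x (lmap y w)) = lmap (\<phi> x) (\<phi> (lmap y w))" .
qed

lemma lmap_equivariant_add_right:
  assumes closed: "\<forall>x\<in>C. \<phi> x \<in> C" and hom: "\<forall>x\<in>C. \<forall>y\<in>C. \<phi> (circ x y) = circ (\<phi> x) (\<phi> y)"
    and w: "lmap_equivariant \<phi> w" and "u \<in> C"
  shows "\<phi> (add u w) = add (\<phi> u) (\<phi> w)"
proof -
  have "w \<in> C"
    using w unfolding lmap_equivariant_def by blast
  then have "\<phi> (add u w) = circ (\<phi> u) (\<phi> (lmap (cinv u) w))"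
    using add_eq_circ_lmap hom \<open>u \<in> C\<close> lmap_closed cinv by simp
  also have "\<dots> = circ (\<phi> u) (lmap (cinv (\<phi> u)) (\<phi> w))"
    using w cinv \<open>u \<in> C\<close> circ_hom_cinv[OF closed hom] unfolding lmap_equivariant_def by simp
  also have "\<dots> = add (\<phi> u) (\<phi> w)"
    using add_eq_circ_lmap closed \<open>u \<in> C\<close> \<open>w \<in> C\<close> by simp
  finally show ?thesis .
qed

lemma lmap_equivariant_add:
  assumes closed: "\<forall>x\<in>C. \<phi> x \<in> C" and hom: "\<forall>x\<in>C. \<forall>y\<in>C. \<phi> (circ x y) = circ (\<phi> x) (\<phi> y)"
    and w: "lmap_equivariant \<phi> w1" "lmap_equivariant \<phi> w2"
  shows "lmap_equivariant \<phi> (add w1 w2)"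
  unfolding lmap_equivariant_def
proof (intro conjI ballI)
  have "w1 \<in> C" "w2 \<in> C"
    using w unfolding lmap_equivariant_def by blast+
  then show "add w1 w2 \<in> C"
    by (rule add_closed)
  fix x assume "x \<in> C"
  then have "\<phi> (lmap x (add w1 w2)) = add (\<phi> (lmap x w1)) (\<phi> (lmap x w2))"
    using lmap_add lmap_equivariant_add_right[OF closed hom] lmap_equivariant_lmap[OF closed hom]
      lmap_closed w \<open>w1 \<in> C\<close> \<open>w2 \<in> C\<close> by simp
  also have "\<dots> = lmap (\<phi> x) (\<phi> (add w1 w2))"
    using w \<open>x \<in> C\<close> \<open>w1 \<in> C\<close> \<open>w2 \<in> C\<close> lmap_add closed lmap_equivariant_add_right[OF closed hom]
    unfolding lmap_equivariant_def by simp
  finally show "\<phi> (lmap x (add w1 w2)) = lmap (\<phi> x) (\<phi> (add w1 w2))" .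
qed

lemma additive_if_lmap_equivariant:
  assumes closed: "\<forall>x\<in>C. \<phi> x \<in> C" and hom: "\<forall>x\<in>C. \<forall>y\<in>C. \<phi> (circ x y) = circ (\<phi> x) (\<phi> y)"
    and tcb: "transitive_cycle_base C add neg zero circ T" and "g \<in> T" and "lmap_equivariant \<phi> g"
  shows "\<forall>x\<in>C. \<forall>y\<in>C. \<phi> (add x y) = add (\<phi> x) (\<phi> y)"
proof -
  have T: "T = {lmap x g | x. x \<in> C}" and g: "g \<in> C"
    using transitive_cycle_base_orbit tcb \<open>g \<in> T\<close> by auto
  have "lmap_equivariant \<phi> y" if "y \<in> add_span add zero T" for y
    using that
  proof (induction y rule: add_span.induct)
    case zero
    then show ?case
      using lmap_zero zero_closed closed circ_hom_zero[OF closed hom] unfolding lmap_equivariant_def by simp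
  next
    case (base s)
    then show ?case
      using lmap_equivariant_lmap[OF closed hom \<open>lmap_equivariant \<phi> g\<close>] unfolding T by blast
  next
    case (plus w1 w2)
    then show ?case
      using lmap_equivariant_add[OF closed hom] by blast
  qed
  moreover have "T \<subseteq> C"
    using T g lmap_closed by auto
  then have "C \<subseteq> add_span add zero T"
    using add_gen_subset_add_span tcb unfolding transitive_cycle_base_def by metis
  ultimately show ?thesis
    using lmap_equivariant_add_right[OF closed hom] by blast
qed

definition intertwines :: "('e \<Rightarrow> 'e) \<Rightarrow> 'e \<Rightarrow> 'e \<Rightarrow> bool" where
  "intertwines f h h' \<longleftrightarrow> h' \<in> C \<and> (\<forall>y\<in>C. f (circ h y) = circ h' (f y))"

lemma intertwines_zero: "\<forall>x\<in>C. f x \<in> C \<Longrightarrow> intertwines f zero zero"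
  unfolding intertwines_def using zero_closed zero_circ by simp

lemma intertwines_circ:
  assumes "\<forall>x\<in>C. f x \<in> C" "a \<in> C" "b \<in> C" "intertwines f a a'" "intertwines f b b'"
  shows "intertwines f (circ a b) (circ a' b')"
  using assms circ_assoc circ_closed unfolding intertwines_def by simp

lemma intertwines_cinv:
  assumes closed: "\<forall>x\<in>C. f x \<in> C" and "a \<in> C" and a': "intertwines f a a'"
  shows "intertwines f (cinv a) (cinv a')"
  unfolding intertwines_def
proof (intro conjI ballI)
  show "cinv a' \<in> C"
    using a' cinv unfolding intertwines_def by blast
  fix y assume "y \<in> C"
  have a'_C: "a' \<in> C" and X: "f (circ (cinv a) y) \<in> C"
    using a' closed cinv circ_closed \<open>a \<in> C\<close> \<open>y \<in> C\<close> unfolding intertwines_def by auto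
  have "f y = f (circ a (circ (cinv a) y))"
    using circ_assoc[of a "cinv a" y] \<open>a \<in> C\<close> \<open>y \<in> C\<close> cinv zero_circ by simp
  also have "\<dots> = circ a' (f (circ (cinv a) y))"
    using a' \<open>a \<in> C\<close> \<open>y \<in> C\<close> cinv circ_closed unfolding intertwines_def by simp
  finally have "circ (cinv a') (f y) = circ (circ (cinv a') a') (f (circ (cinv a) y))"
    using circ_assoc[OF cinv(1)[OF a'_C] a'_C X] by simp
  then show "f (circ (cinv a) y) = circ (cinv a') (f y)"
    using cinv(3)[OF a'_C] zero_circ[OF X] by simp
qed

lemma intertwines_unique:
  assumes "\<forall>x\<in>C. f x \<in> C" "h \<in> C" "intertwines f h h'"
  shows "h' = circ (f h) (cinv (f zero))"
proof -
  have h': "h' \<in> C" and "f (circ h zero) = circ h' (f zero)"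
    using assms(3) zero_closed unfolding intertwines_def by auto
  then have "circ (f h) (cinv (f zero)) = circ h' (circ (f zero) (cinv (f zero)))"
    using circ_assoc cinv assms(1,2) zero_closed circ_zero by simp
  then show ?thesis
    using cinv assms(1) zero_closed circ_zero h' by simp
qed

lemma cycle_set_iso_intertwines_generators:
  assumes "\<forall>x\<in>C. \<forall>y\<in>C. f (cyc g x y) = cyc g' (f x) (f y)" "\<forall>x\<in>C. f x \<in> C" "g' \<in> C" "x \<in> C"
  shows "intertwines f (cinv (lmap x g)) (cinv (lmap (f x) g'))"
  using assms cinv lmap_closed unfolding intertwines_def uc_cycle_op_def by simp

lemma transitive_cycle_base_circ_induct:
  assumes tcb: "transitive_cycle_base C add neg zero circ T" and "g \<in> T" "h \<in> C"
    and zero: "P zero"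
    and circ: "\<And>a b. a \<in> C \<Longrightarrow> b \<in> C \<Longrightarrow> P a \<Longrightarrow> P b \<Longrightarrow> P (circ a b)"
    and inv: "\<And>a. a \<in> C \<Longrightarrow> P a \<Longrightarrow> P (cinv a)"
    and generator: "\<And>x. x \<in> C \<Longrightarrow> P (cinv (lmap x g))"
  shows "P h"
proof -
  have T: "T = {lmap x g | x. x \<in> C}" and g: "g \<in> C"
    using transitive_cycle_base_orbit tcb \<open>g \<in> T\<close> by auto
  have "h \<in> C \<and> P h" if "h \<in> circ_span circ zero T" for h
    using that
  proof (induction h rule: circ_span.induct)
    case zero
    then show ?case
      using \<open>P zero\<close> zero_closed by simp
  next
    case (base t)
    then obtain x where "x \<in> C" "t = lmap x g"
      unfolding T by blast
    then show ?case
      using inv[OF _ generator] cinv_cinv lmap_closed cinv g by metis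
  next
    case (mult a b)
    then show ?case
      using circ circ_closed by blast
  qed
  then show ?thesis
    using transitive_cycle_base_circ_span[OF tcb] \<open>h \<in> C\<close> by blast
qed

theorem cycle_set_iso_imp_brace_aut:
  assumes tcb: "transitive_cycle_base C add neg zero circ T" and "g \<in> T" "g' \<in> C"
    and iso: "cycle_set_iso C (cyc g) (cyc g')"
  shows "\<exists>\<phi> e. brace_aut \<phi> \<and> e \<in> C \<and> \<phi> g = lmap e g'"
proof -
  have g: "g \<in> C"
    using transitive_cycle_base_orbit tcb \<open>g \<in> T\<close> by auto
  obtain f where f: "bij_betw f C C" and f_iso: "\<forall>x\<in>C. \<forall>y\<in>C. f (cyc g x y) = cyc g' (f x) (f y)"
    using iso unfolding cycle_set_iso_def by blast
  have f_closed: "\<forall>x\<in>C. f x \<in> C"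
    using f bij_betwE by blast
  define e where "e = f zero"
  have e: "e \<in> C"
    using f_closed zero_closed e_def by simp
  define \<phi> where "\<phi> x = circ (f x) (cinv e)" for x
  have \<phi>_closed: "\<forall>x\<in>C. \<phi> x \<in> C"
    using f_closed e cinv circ_closed unfolding \<phi>_def by simp
  have intertwines_\<phi>: "intertwines f h (\<phi> h)" if "h \<in> C" for h
  proof -
    have "\<exists>h'. intertwines f h h'"
      by (rule transitive_cycle_base_circ_induct[OF tcb \<open>g \<in> T\<close> \<open>h \<in> C\<close>])
        (use intertwines_zero intertwines_circ intertwines_cinv cycle_set_iso_intertwines_generators
          f_closed f_iso \<open>g' \<in> C\<close> in blast)+
    then show ?thesis
      using intertwines_unique[OF f_closed \<open>h \<in> C\<close>] unfolding \<phi>_def e_def by blast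
  qed
  have f_eq: "f x = circ (\<phi> x) e" if "x \<in> C" for x
    using intertwines_\<phi>[OF that] zero_closed circ_zero that e_def unfolding intertwines_def by metis
  have hom: "\<forall>x\<in>C. \<forall>y\<in>C. \<phi> (circ x y) = circ (\<phi> x) (\<phi> y)"
  proof (intro ballI)
    fix x y assume xy: "x \<in> C" "y \<in> C"
    then have "circ (\<phi> (circ x y)) e = circ (circ (\<phi> x) (\<phi> y)) e"
      using f_eq intertwines_\<phi>[OF xy(1)] circ_closed \<phi>_closed e circ_assoc unfolding intertwines_def by metis
    then show "\<phi> (circ x y) = circ (\<phi> x) (\<phi> y)"
      by (rule circ_right_cancel[OF e, rotated 2]) (use circ_closed \<phi>_closed xy in auto)
  qed
  have "bij_betw (\<lambda>x. circ x (cinv e)) C C"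
    by (rule bij_betw_byWitness[where f'="\<lambda>x. circ x e"]) (use circ_assoc e cinv circ_zero circ_closed in auto)
  then have bij: "bij_betw \<phi> C C"
    using bij_betw_trans[OF f] unfolding \<phi>_def comp_def by blast
  have \<phi>_lmap: "\<phi> (lmap x g) = lmap (f x) g'" if "x \<in> C" for x
  proof -
    have "\<phi> (cinv (lmap x g)) = cinv (lmap (f x) g')"
      using intertwines_unique[OF f_closed] cycle_set_iso_intertwines_generators[OF f_iso f_closed \<open>g' \<in> C\<close> that]
        intertwines_\<phi> cinv lmap_closed that g unfolding \<phi>_def e_def by metis
    then have "cinv (cinv (\<phi> (lmap x g))) = cinv (cinv (lmap (f x) g'))"
      using circ_hom_cinv[OF \<phi>_closed hom] lmap_closed that g by simp
    then show ?thesis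
      using cinv_cinv lmap_closed that g \<open>g' \<in> C\<close> f_closed \<phi>_closed by simp
  qed
  have \<phi>_g: "\<phi> g = lmap e g'"
    using \<phi>_lmap[OF zero_closed] zero_lmap g e_def by simp
  have "lmap_equivariant \<phi> g"
    unfolding lmap_equivariant_def using \<phi>_lmap f_eq \<phi>_g lmap_circ \<phi>_closed e \<open>g' \<in> C\<close> g by simp
  then have "\<forall>x\<in>C. \<forall>y\<in>C. \<phi> (add x y) = add (\<phi> x) (\<phi> y)"
    using additive_if_lmap_equivariant \<phi>_closed hom tcb \<open>g \<in> T\<close> by blast
  then have "brace_aut \<phi>"
    unfolding brace_aut_def using bij hom by blast
  then show ?thesis
    using \<phi>_g e by blast
qed

text \<open>The elements whose coordinate is divisible by a common divisor \<open>d\<close> of \<open>\<pi> t\<close> and \<open>N\<close>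
  form an additive subgroup containing the base, hence also \<open>e\<close>.\<close>

lemma transitive_cycle_base_coordinate_coprime:
  fixes \<pi> :: "'e \<Rightarrow> int"
  assumes tcb: "transitive_cycle_base C add neg zero circ T" and "t \<in> T"
    and \<pi>_lmap: "\<forall>x\<in>C. \<forall>y\<in>C. \<exists>\<mu>. \<pi> (lmap x y) = (\<mu> * \<pi> y) mod N"
    and \<pi>_add: "\<forall>x\<in>C. \<forall>y\<in>C. \<pi> (add x y) = (\<pi> x + \<pi> y) mod N"
    and \<pi>_neg: "\<forall>x\<in>C. \<pi> (neg x) = (- \<pi> x) mod N"
    and \<pi>_zero: "\<pi> zero = 0"
    and "e \<in> C" "\<pi> e = 1"
  shows "coprime (\<pi> t) N"
proof (rule coprimeI)
  fix d assume dt: "d dvd \<pi> t" and dN: "d dvd N"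
  have T: "T = {lmap x t | x. x \<in> C}" and t: "t \<in> C"
    using transitive_cycle_base_orbit tcb \<open>t \<in> T\<close> by auto
  have gen: "add_gen add neg zero T = C"
    using tcb unfolding transitive_cycle_base_def by blast
  have T_dvd: "d dvd \<pi> s" if s: "s \<in> T" for s
  proof -
    obtain x where "x \<in> C" "s = lmap x t"
      using s unfolding T by blast
    then obtain \<mu> where "\<pi> s = (\<mu> * \<pi> t) mod N"
      using \<pi>_lmap t by blast
    then show ?thesis
      using dt dN by (simp add: dvd_mod)
  qed
  have "d dvd \<pi> y" if "y \<in> add_gen add neg zero T" for y
    using that
  proof (induction y rule: add_gen.induct)
    case (base s)
    then show ?case
      by (rule T_dvd)
  next
    case (plus x y)
    then show ?case
      using \<pi>_add dN gen by (simp add: dvd_mod)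
  next
    case (uminus x)
    then show ?case
      using \<pi>_neg dN gen by (simp add: dvd_mod)
  qed (use \<pi>_zero in auto)
  then have "d dvd \<pi> e"
    using \<open>e \<in> C\<close> gen by simp
  then show "is_unit d"
    using \<open>\<pi> e = 1\<close> by simp
qed

end

section \<open>Tuples of residues\<close>

lemma funpow_hom:
  assumes "\<forall>y\<in>S. f (p x y) = q (f x) (f y)" "\<forall>y\<in>S. p x y \<in> S" "z \<in> S"
  shows "f ((p x ^^ n) z) = (q (f x) ^^ n) (f z)"
proof -
  have "(p x ^^ n) z \<in> S \<and> f ((p x ^^ n) z) = (q (f x) ^^ n) (f z)"
    by (induction n) (use assms in auto)
  then show ?thesis ..
qed

lemma chinese_remainder_int:
  fixes N :: "'i \<Rightarrow> nat" and w :: "'i \<Rightarrow> int"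
  assumes "finite I" "\<forall>i\<in>I. N i > 0" "\<forall>i\<in>I. \<forall>j\<in>I. i \<noteq> j \<longrightarrow> coprime (N i) (N j)"
  shows "\<exists>n::nat. \<forall>i\<in>I. [int n = w i] (mod int (N i))"
proof -
  obtain n where n: "\<forall>i\<in>I. [n = nat (w i mod int (N i))] (mod N i)"
    using chinese_remainder_nat[OF assms(1,3), of "\<lambda>i. nat (w i mod int (N i))"] by blast
  have "[int n = w i] (mod int (N i))" if "i \<in> I" for i
  proof -
    have "[int n = int (nat (w i mod int (N i)))] (mod int (N i))"
      using n that cong_int_iff by blast
    also have "int (nat (w i mod int (N i))) = w i mod int (N i)"
      using assms(2) that by simp
    finally show ?thesis
      by (simp add: cong_def)
  qed
  then show ?thesis
    by blast
qed

definition tup_mul :: "nat set \<Rightarrow> (nat \<Rightarrow> nat) \<Rightarrow> (nat \<Rightarrow> int) \<Rightarrow> (nat \<Rightarrow> int) \<Rightarrow> (nat \<Rightarrow> int)" where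
  "tup_mul I N u x = (\<lambda>i. if i \<in> I then (u i * x i) mod int (N i) else 0)"

lemma tup_car_eq_mod: "x \<in> tup_car I N \<Longrightarrow> i \<in> I \<Longrightarrow> x i mod int (N i) = x i"
  by (simp add: tup_car_def)

lemma tup_car_outside: "x \<in> tup_car I N \<Longrightarrow> i \<notin> I \<Longrightarrow> x i = 0"
  by (simp add: tup_car_def)

lemma tup_car_range: "x \<in> tup_car I N \<Longrightarrow> i \<in> I \<Longrightarrow> 0 \<le> x i \<and> x i < int (N i)"
  by (simp add: tup_car_def)

lemma tup_add_commute: "tup_add I N x y = tup_add I N y x"
  by (auto simp: tup_add_def fun_eq_iff add.commute)

lemma tup_circ_commute: "tup_circ I N E x y = tup_circ I N E y x"
  by (auto simp: tup_circ_def fun_eq_iff algebra_simps)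

lemma tup_mul_add: "tup_mul I N u (tup_add I N x y) = tup_add I N (tup_mul I N u x) (tup_mul I N u y)"
  by (auto simp: tup_mul_def tup_add_def fun_eq_iff mod_simps algebra_simps)

lemma tup_mul_mul: "tup_mul I N u (tup_mul I N w x) = tup_mul I N (\<lambda>i. u i * w i) x"
  by (auto simp: tup_mul_def fun_eq_iff mod_simps algebra_simps)

lemma tup_mul_commute: "tup_mul I N u (tup_mul I N w x) = tup_mul I N w (tup_mul I N u x)"
  by (simp add: tup_mul_mul mult.commute)

lemma tup_mul_emb: "j \<in> I \<Longrightarrow> tup_mul I N u (emb j x) = emb j ((u j * x) mod int (N j))"
  by (auto simp: tup_mul_def emb_def fun_eq_iff)

lemma tup_mul_zero [simp]: "tup_mul I N u (\<lambda>_. 0) = (\<lambda>_. 0)"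
  by (simp add: tup_mul_def fun_eq_iff)

lemma tup_mul_cong: "\<forall>i\<in>I. [u i = u' i] (mod int (N i)) \<Longrightarrow> tup_mul I N u x = tup_mul I N u' x"
  by (auto simp: tup_mul_def fun_eq_iff cong_def intro: mod_mult_cong)

lemma tup_mul_one: "x \<in> tup_car I N \<Longrightarrow> tup_mul I N x (\<lambda>i. of_bool (i \<in> I)) = x"
  by (auto simp: tup_mul_def fun_eq_iff tup_car_eq_mod tup_car_outside)

lemma emb_apply: "emb j x j = x"
  by (simp add: emb_def)

lemma tup_neg_eq_tup_mul:
  assumes "\<forall>i\<in>I. N i dvd L" "L > 0"
  shows "tup_neg I N x = tup_mul I N (\<lambda>_. int (L - 1)) x"
proof -
  have "\<forall>i\<in>I. [int (L - 1) = - 1] (mod int (N i))"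
    using assms by (auto simp: cong_iff_dvd_diff of_nat_diff)
  then have "tup_mul I N (\<lambda>_. int (L - 1)) x = tup_mul I N (\<lambda>_. - 1) x"
    by (rule tup_mul_cong)
  moreover have "tup_neg I N x = tup_mul I N (\<lambda>_. - 1) x"
    by (simp add: tup_mul_def tup_neg_def fun_eq_iff)
  ultimately show ?thesis
    by simp
qed

lemma tup_circ_emb:
  "j \<in> I \<Longrightarrow> tup_circ I N E (emb j x) (emb j y) = emb j ((x + y + int (E j) * x * y) mod int (N j))"
  by (auto simp: tup_circ_def emb_def fun_eq_iff)

text \<open>Multiplication by \<open>u\<close> is an endomorphism of \<open>x \<circ> y = x + y + E x y\<close> as soon as
  \<open>E (u - 1) \<equiv> 0\<close>, since \<open>E (u x) (u y) = u (E x y) + E (u - 1) u x y\<close>.\<close>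

lemma tup_mul_circ:
  assumes "\<forall>j\<in>I. int (N j) dvd int (E j) * (u j - 1)"
  shows "tup_mul I N u (tup_circ I N E x y) = tup_circ I N E (tup_mul I N u x) (tup_mul I N u y)"
proof
  fix j
  show "tup_mul I N u (tup_circ I N E x y) j = tup_circ I N E (tup_mul I N u x) (tup_mul I N u y) j"
  proof (cases "j \<in> I")
    case True
    obtain k where k: "int (E j) * (u j - 1) = int (N j) * k"
      using assms True by (auto elim: dvdE)
    have "u j * x j + u j * y j + int (E j) * (u j * x j) * (u j * y j)
        = u j * (x j + y j + int (E j) * x j * y j) + (int (E j) * (u j - 1)) * (u j * x j * y j)"
      by (simp add: algebra_simps)
    also have "\<dots> = u j * (x j + y j + int (E j) * x j * y j) + (k * (u j * x j * y j)) * int (N j)"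
      by (simp add: k)
    finally have "[u j * x j + u j * y j + int (E j) * (u j * x j) * (u j * y j)
        = u j * (x j + y j + int (E j) * x j * y j)] (mod int (N j))"
      by (simp add: cong_def)
    moreover have "[(u j * x j) mod int (N j) + (u j * y j) mod int (N j)
          + int (E j) * ((u j * x j) mod int (N j)) * ((u j * y j) mod int (N j))
        = u j * x j + u j * y j + int (E j) * (u j * x j) * (u j * y j)] (mod int (N j))"
      by (intro cong_add cong_mult cong_refl) (simp_all add: cong_def)
    ultimately show ?thesis
      using True by (simp add: tup_mul_def tup_circ_def cong_def mod_mult_right_eq)
  next
    case False
    then show ?thesis
      by (simp add: tup_mul_def tup_circ_def)
  qed
qed

lemma tup_mul_inverse:
  assumes "\<forall>j\<in>I. [u j * u' j = 1] (mod int (N j))" "x \<in> tup_car I N"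
  shows "tup_mul I N u' (tup_mul I N u x) = x"
proof
  fix j
  show "tup_mul I N u' (tup_mul I N u x) j = x j"
  proof (cases "j \<in> I")
    case True
    then have "[u' j * u j * x j = 1 * x j] (mod int (N j))"
      using assms(1) by (intro cong_mult cong_refl) (simp add: mult.commute)
    then show ?thesis
      using True assms(2) by (simp add: tup_mul_mul cong_def tup_car_eq_mod) (simp add: tup_mul_def)
  next
    case False
    then show ?thesis
      using assms(2) by (simp add: tup_mul_def tup_car_def)
  qed
qed


lemma tup_zero_closed: "\<forall>i\<in>I. N i > 0 \<Longrightarrow> (\<lambda>_. 0) \<in> tup_car I N"
  by (auto simp: tup_car_def)

lemma tup_add_closed: "\<forall>i\<in>I. N i > 0 \<Longrightarrow> tup_add I N x y \<in> tup_car I N"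
  by (auto simp: tup_car_def tup_add_def)

lemma tup_neg_closed: "\<forall>i\<in>I. N i > 0 \<Longrightarrow> tup_neg I N x \<in> tup_car I N"
  by (auto simp: tup_car_def tup_neg_def)

lemma tup_circ_closed: "\<forall>i\<in>I. N i > 0 \<Longrightarrow> tup_circ I N E x y \<in> tup_car I N"
  by (auto simp: tup_car_def tup_circ_def)

lemma tup_mul_closed: "\<forall>i\<in>I. N i > 0 \<Longrightarrow> tup_mul I N u x \<in> tup_car I N"
  by (auto simp: tup_car_def tup_mul_def)

lemma emb_closed: "\<forall>i\<in>I. N i > 0 \<Longrightarrow> j \<in> I \<Longrightarrow> 0 \<le> s \<Longrightarrow> s < int (N j) \<Longrightarrow> emb j s \<in> tup_car I N"
  by (auto simp: emb_def tup_car_def)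

lemma tup_add_assoc: "tup_add I N (tup_add I N x y) w = tup_add I N x (tup_add I N y w)"
  by (auto simp: tup_add_def fun_eq_iff mod_simps add.assoc)

lemma tup_add_zero: "x \<in> tup_car I N \<Longrightarrow> tup_add I N x (\<lambda>_. 0) = x"
  by (auto simp: tup_add_def fun_eq_iff tup_car_eq_mod tup_car_outside)

lemma tup_zero_add: "x \<in> tup_car I N \<Longrightarrow> tup_add I N (\<lambda>_. 0) x = x"
  using tup_add_zero tup_add_commute by metis

lemma tup_add_neg: "tup_add I N x (tup_neg I N x) = (\<lambda>_. 0)"
  by (auto simp: tup_add_def tup_neg_def fun_eq_iff mod_simps)

lemma tup_add_left_cancel:
  assumes "x \<in> tup_car I N" "y \<in> tup_car I N" "w \<in> tup_car I N" "tup_add I N x y = tup_add I N x w"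
  shows "y = w"
proof -
  have "tup_add I N (tup_neg I N x) (tup_add I N x y) = tup_add I N (tup_neg I N x) (tup_add I N x w)"
    using assms by simp
  then show ?thesis
    using tup_add_assoc tup_add_commute tup_add_neg tup_add_zero assms by metis
qed

lemma tup_circ_assoc: "tup_circ I N E (tup_circ I N E x y) w = tup_circ I N E x (tup_circ I N E y w)"
proof -
  have "[(x i + y i + int (E i) * x i * y i) mod int (N i) + w i
         + int (E i) * ((x i + y i + int (E i) * x i * y i) mod int (N i)) * w i
       = x i + (y i + w i + int (E i) * y i * w i) mod int (N i)
         + int (E i) * x i * ((y i + w i + int (E i) * y i * w i) mod int (N i))] (mod int (N i))" for i
  proof -
    have "[(x i + y i + int (E i) * x i * y i) mod int (N i) + w i
         + int (E i) * ((x i + y i + int (E i) * x i * y i) mod int (N i)) * w i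
       = (x i + y i + int (E i) * x i * y i) + w i
         + int (E i) * (x i + y i + int (E i) * x i * y i) * w i] (mod int (N i))"
      by (intro cong_add cong_mult cong_refl) (simp_all add: cong_def)
    moreover have "[x i + (y i + w i + int (E i) * y i * w i)
         + int (E i) * x i * (y i + w i + int (E i) * y i * w i)
       = x i + (y i + w i + int (E i) * y i * w i) mod int (N i)
         + int (E i) * x i * ((y i + w i + int (E i) * y i * w i) mod int (N i))] (mod int (N i))"
      by (intro cong_add cong_mult cong_refl) (simp_all add: cong_def)
    ultimately show ?thesis
      by (simp add: cong_def algebra_simps)
  qed
  then show ?thesis
    by (auto simp: tup_circ_def fun_eq_iff cong_def)
qed

lemma tup_circ_zero: "x \<in> tup_car I N \<Longrightarrow> tup_circ I N E x (\<lambda>_. 0) = x"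
  by (auto simp: tup_circ_def fun_eq_iff tup_car_eq_mod tup_car_outside)

lemma tup_zero_circ: "x \<in> tup_car I N \<Longrightarrow> tup_circ I N E (\<lambda>_. 0) x = x"
  using tup_circ_zero tup_circ_commute by metis

lemma tup_circ_add_distrib:
  "tup_circ I N E x (tup_add I N y w)
   = tup_add I N (tup_add I N (tup_circ I N E x y) (tup_neg I N x)) (tup_circ I N E x w)"
proof -
  have "[x i + (y i + w i) mod int (N i) + int (E i) * x i * ((y i + w i) mod int (N i))
      = ((x i + y i + int (E i) * x i * y i) mod int (N i) + - x i mod int (N i)) mod int (N i)
        + (x i + w i + int (E i) * x i * w i) mod int (N i)] (mod int (N i))" for i
  proof -
    have "[x i + (y i + w i) mod int (N i) + int (E i) * x i * ((y i + w i) mod int (N i))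
        = x i + (y i + w i) + int (E i) * x i * (y i + w i)] (mod int (N i))"
      by (intro cong_add cong_mult cong_refl) (simp_all add: cong_def)
    also have "x i + (y i + w i) + int (E i) * x i * (y i + w i)
        = (x i + y i + int (E i) * x i * y i) + - x i + (x i + w i + int (E i) * x i * w i)"
      by (simp add: algebra_simps)
    also have "[\<dots> = ((x i + y i + int (E i) * x i * y i) mod int (N i) + - x i mod int (N i)) mod int (N i)
        + (x i + w i + int (E i) * x i * w i) mod int (N i)] (mod int (N i))"
      by (simp add: cong_def mod_simps)
    finally show ?thesis .
  qed
  then show ?thesis
    by (auto simp: tup_circ_def tup_add_def tup_neg_def fun_eq_iff cong_def)
qed

lemma tup_circ_inverse_ex:
  assumes N_pos: "\<forall>i\<in>I. N i > 0"
    and unit: "\<forall>i\<in>I. \<forall>z. coprime (1 + int (E i) * z) (int (N i))" and x: "x \<in> tup_car I N"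
  shows "\<exists>y\<in>tup_car I N. tup_circ I N E x y = (\<lambda>_. 0) \<and> tup_circ I N E y x = (\<lambda>_. 0)"
proof -
  have "\<forall>i\<in>I. \<exists>w. [(1 + int (E i) * x i) * w = 1] (mod int (N i))"
    using cong_solve_coprime_int unit by blast
  then obtain u where u: "\<forall>i\<in>I. [(1 + int (E i) * x i) * u i = 1] (mod int (N i))"
    by (metis bchoice)
  define y where "y = tup_mul I N (\<lambda>i. - u i) x"
  have "(x i + (- u i * x i) mod int (N i) + int (E i) * x i * ((- u i * x i) mod int (N i))) mod int (N i) = 0"
    if i: "i \<in> I" for i
  proof -
    have "[x i + (- u i * x i) mod int (N i) + int (E i) * x i * ((- u i * x i) mod int (N i))
        = x i + - u i * x i + int (E i) * x i * (- u i * x i)] (mod int (N i))"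
      by (intro cong_add cong_mult cong_refl) (simp_all add: cong_def)
    also have "x i + - u i * x i + int (E i) * x i * (- u i * x i) = x i - x i * ((1 + int (E i) * x i) * u i)"
      by (simp add: algebra_simps)
    also have "[x i - x i * ((1 + int (E i) * x i) * u i) = x i - x i * 1] (mod int (N i))"
      using u i by (intro cong_diff cong_mult cong_refl) auto
    finally show ?thesis
      by (simp add: cong_def)
  qed
  then have "tup_circ I N E x y = (\<lambda>_. 0)"
    by (auto simp: tup_circ_def fun_eq_iff y_def tup_mul_def)
  then show ?thesis
    using tup_mul_closed[OF N_pos] tup_circ_commute unfolding y_def by metis
qed

lemma tup_lam_eq: "lam (tup_add I N) (tup_neg I N) (tup_circ I N E) x y = tup_mul I N (\<lambda>i. 1 + int (E i) * x i) y"
proof -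
  have "((- x i) mod int (N i) + (x i + y i + int (E i) * x i * y i) mod int (N i)) mod int (N i)
      = ((1 + int (E i) * x i) * y i) mod int (N i)" for i
    unfolding mod_add_eq by (simp add: algebra_simps)
  then show ?thesis
    unfolding lam_def by (auto simp: tup_add_def tup_neg_def tup_circ_def tup_mul_def fun_eq_iff)
qed

lemma tup_funpow_add: "x \<in> tup_car I N \<Longrightarrow> (tup_add I N x ^^ n) (\<lambda>_. 0) = tup_mul I N (\<lambda>_. int n) x"
  by (induction n) (auto simp: tup_add_def tup_mul_def fun_eq_iff mod_simps algebra_simps tup_car_outside)


lemma tup_one_closed: "\<forall>i\<in>I. N i > 1 \<Longrightarrow> (\<lambda>i. of_bool (i \<in> I)) \<in> tup_car I N"
  by (auto simp: tup_car_def)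

lemma tup_additive_zero:
  assumes N_pos: "\<forall>i\<in>I. N i > 0" and closed: "\<forall>x\<in>tup_car I N. f x \<in> tup_car I N"
    and additive: "\<forall>x\<in>tup_car I N. \<forall>y\<in>tup_car I N. f (tup_add I N x y) = tup_add I N (f x) (f y)"
  shows "f (\<lambda>_. 0) = (\<lambda>_. 0)"
proof -
  have "tup_add I N (\<lambda>_. 0) (\<lambda>_. 0) = (\<lambda>_. (0::int))"
    by (auto simp: tup_add_def)
  then have "tup_add I N (f (\<lambda>_. 0)) (f (\<lambda>_. 0)) = tup_add I N (f (\<lambda>_. 0)) (\<lambda>_. 0)"
    using additive closed tup_zero_closed[OF N_pos] tup_add_zero by metis
  then show ?thesis
    using tup_add_left_cancel closed tup_zero_closed[OF N_pos] by metis
qed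

text \<open>By the Chinese remainder theorem the all-ones tuple generates the tuple group.\<close>

lemma tup_additive_eq_tup_mul:
  assumes fin: "finite I" and N_gt1: "\<forall>i\<in>I. N i > 1"
    and coprime: "\<forall>i\<in>I. \<forall>j\<in>I. i \<noteq> j \<longrightarrow> coprime (N i) (N j)"
    and closed: "\<forall>x\<in>tup_car I N. f x \<in> tup_car I N"
    and additive: "\<forall>x\<in>tup_car I N. \<forall>y\<in>tup_car I N. f (tup_add I N x y) = tup_add I N (f x) (f y)"
    and y: "y \<in> tup_car I N"
  shows "f y = tup_mul I N (f (\<lambda>i. of_bool (i \<in> I))) y"
proof -
  have N_pos: "\<forall>i\<in>I. N i > 0"
    using N_gt1 by auto
  define one :: "nat \<Rightarrow> int" where "one = (\<lambda>i. of_bool (i \<in> I))"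
  have one: "one \<in> tup_car I N"
    unfolding one_def using tup_one_closed N_gt1 by blast
  obtain n where n: "\<forall>i\<in>I. [int n = y i] (mod int (N i))"
    using chinese_remainder_int[OF fin N_pos coprime] by blast
  then have "y = tup_mul I N (\<lambda>_. int n) one"
    using tup_mul_cong tup_mul_one y unfolding one_def by metis
  then have "y = (tup_add I N one ^^ n) (\<lambda>_. 0)"
    using tup_funpow_add[OF one] by simp
  then have "f y = (tup_add I N (f one) ^^ n) (f (\<lambda>_. 0))"
    using funpow_hom[of "tup_car I N" f "tup_add I N" one] additive one tup_add_closed[OF N_pos]
      tup_zero_closed[OF N_pos] by simp
  also have "\<dots> = tup_mul I N (\<lambda>_. int n) (f one)"
    using tup_additive_zero[OF N_pos closed additive] tup_funpow_add closed one by simp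
  also have "\<dots> = tup_mul I N (\<lambda>_. int n) (tup_mul I N (f one) one)"
    using tup_mul_one closed one unfolding one_def by simp
  also have "\<dots> = tup_mul I N (f one) y"
    using tup_mul_commute \<open>y = tup_mul I N (\<lambda>_. int n) one\<close> by metis
  finally show ?thesis
    unfolding one_def .
qed

lemma tup_additive_tup_mul_commute:
  assumes "finite I" "\<forall>i\<in>I. N i > 1" "\<forall>i\<in>I. \<forall>j\<in>I. i \<noteq> j \<longrightarrow> coprime (N i) (N j)"
    and "\<forall>x\<in>tup_car I N. f x \<in> tup_car I N"
    and "\<forall>x\<in>tup_car I N. \<forall>y\<in>tup_car I N. f (tup_add I N x y) = tup_add I N (f x) (f y)"
    and "x \<in> tup_car I N"
  shows "f (tup_mul I N u x) = tup_mul I N u (f x)"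
proof -
  have "\<forall>i\<in>I. N i > 0"
    using assms(2) by auto
  then have "tup_mul I N u x \<in> tup_car I N"
    by (rule tup_mul_closed)
  then have "f (tup_mul I N u x) = tup_mul I N (f (\<lambda>i. of_bool (i \<in> I))) (tup_mul I N u x)"
    by (rule tup_additive_eq_tup_mul[OF assms(1-5)])
  also have "\<dots> = tup_mul I N u (tup_mul I N (f (\<lambda>i. of_bool (i \<in> I))) x)"
    by (rule tup_mul_commute)
  also have "\<dots> = tup_mul I N u (f x)"
    using tup_additive_eq_tup_mul[OF assms(1-5) assms(6)] by simp
  finally show ?thesis .
qed

lemma bij_betw_tup_mul:
  assumes "\<forall>i\<in>I. N i > 0" "\<forall>j\<in>I. coprime (u j) (int (N j))"
  shows "bij_betw (tup_mul I N u) (tup_car I N) (tup_car I N)"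
proof -
  have "\<forall>j\<in>I. \<exists>w. [u j * w = 1] (mod int (N j))"
    using assms(2) cong_solve_coprime_int by blast
  then obtain u' where u': "\<forall>j\<in>I. [u j * u' j = 1] (mod int (N j))"
    by (metis bchoice)
  then have "\<forall>j\<in>I. [u' j * u j = 1] (mod int (N j))"
    by (simp add: mult.commute)
  then show ?thesis
    using u' tup_mul_inverse tup_mul_closed[OF assms(1)]
    by (intro bij_betw_byWitness[where f'="tup_mul I N u'"]) auto
qed

lemma tup_mul_factorization:
  assumes "x \<in> tup_car I N" "\<forall>j\<in>I. x j = (u j * w j * y j) mod int (N j)"
  shows "tup_mul I N u (tup_mul I N w y) = x"
  unfolding tup_mul_mul using assms by (auto simp: fun_eq_iff tup_mul_def tup_car_outside)

lemma coprime_mod_mult_left: "coprime ((u * y) mod N) N \<Longrightarrow> coprime u (N :: int)"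
  by (metis coprime_common_divisor coprimeI dvd_mod dvd_mult2)

lemma tup_mul_units_transitive:
  assumes "x \<in> tup_car I N" "y \<in> tup_car I N"
    and "\<forall>j\<in>I. coprime (x j) (int (N j))" "\<forall>j\<in>I. coprime (y j) (int (N j))"
  obtains u where "\<forall>j\<in>I. coprime (u j) (int (N j))" "tup_mul I N u x = y"
proof -
  have "\<forall>j\<in>I. \<exists>w. [x j * w = 1] (mod int (N j))"
    using assms(3) cong_solve_coprime_int by blast
  then obtain w where w: "\<forall>j\<in>I. [x j * w j = 1] (mod int (N j))"
    by (metis bchoice)
  have "coprime (y j * w j) (int (N j))" if "j \<in> I" for j
    using w assms(4) that cong_imp_coprime[of 1 "x j * w j" "int (N j)"]
    by (simp add: cong_sym_eq coprime_mult_left_iff)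
  moreover have "tup_mul I N (\<lambda>j. y j * w j) x = y"
  proof
    fix j
    show "tup_mul I N (\<lambda>j. y j * w j) x j = y j"
    proof (cases "j \<in> I")
      case True
      then have "[y j * (x j * w j) = y j * 1] (mod int (N j))"
        using w by (intro cong_scalar_left) blast
      then show ?thesis
        using assms(2) True tup_car_eq_mod by (simp add: tup_mul_def cong_def ac_simps)
    next
      case False
      then show ?thesis
        using assms(2) tup_car_outside by (simp add: tup_mul_def)
    qed
  qed
  ultimately show ?thesis
    by (intro that[of "\<lambda>j. y j * w j"]) auto
qed

lemma tup_circ_eq_tup_mul:
  assumes "\<forall>j\<in>I. [(1 + int (E j) * c j) * w j = 1] (mod int (N j))"
  shows "tup_circ I N E c (tup_mul I N s (\<lambda>j. c j * w j)) = tup_mul I N (\<lambda>j. 1 + s j) c"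
proof
  fix j
  show "tup_circ I N E c (tup_mul I N s (\<lambda>j. c j * w j)) j = tup_mul I N (\<lambda>j. 1 + s j) c j"
  proof (cases "j \<in> I")
    case True
    have "[c j + (s j * (c j * w j)) mod int (N j) + int (E j) * c j * ((s j * (c j * w j)) mod int (N j))
        = c j + s j * c j * ((1 + int (E j) * c j) * w j)] (mod int (N j))"
    proof -
      have "[c j + (s j * (c j * w j)) mod int (N j) + int (E j) * c j * ((s j * (c j * w j)) mod int (N j))
          = c j + s j * (c j * w j) + int (E j) * c j * (s j * (c j * w j))] (mod int (N j))"
        by (intro cong_add cong_mult cong_refl) (simp_all add: cong_def)
      then show ?thesis
        by (simp add: algebra_simps)
    qed
    also have "[c j + s j * c j * ((1 + int (E j) * c j) * w j) = c j + s j * c j * 1] (mod int (N j))"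
      using assms True by (intro cong_add cong_mult cong_refl) auto
    finally show ?thesis
      using True by (simp add: tup_circ_def tup_mul_def cong_def algebra_simps)
  next
    case False
    then show ?thesis
      by (simp add: tup_circ_def tup_mul_def)
  qed
qed

lemma tup_scalar_surj_coprime:
  assumes "\<forall>y\<in>tup_car I N. \<exists>x\<in>tup_car I N. tup_mul I N (\<lambda>_. k) x = y" "j \<in> I" "\<forall>i\<in>I. N i > 1"
  shows "coprime k (int (N j))"
proof -
  have "emb j 1 \<in> tup_car I N"
    using assms(2,3) by (auto simp: emb_def tup_car_def)
  then obtain x where "tup_mul I N (\<lambda>_. k) x = emb j 1"
    using assms(1) by blast
  then have "(k * x j) mod int (N j) = 1"
    using assms(2) unfolding tup_mul_def emb_def by (metis (full_types))
  then show ?thesis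
    by (metis coprime_commute coprime_mod_left_iff coprime_mult_right_iff coprime_1_left
        assms(2,3) of_nat_0_less_iff order.strict_trans zero_less_one not_less_iff_gr_or_eq)
qed

lemma soc1_iff:
  assumes "N > 1"
  shows "s \<in> soc1 N E \<longleftrightarrow> 0 \<le> s \<and> s < int N \<and> int N dvd int E * s"
proof
  assume s: "s \<in> soc1 N E"
  moreover have "1 \<in> {0..<int N}"
    using assms by simp
  ultimately have "(- s + (s + 1 + int E * s * 1)) mod int N = 1"
    unfolding soc1_def by blast
  then have "(1 + int E * s) mod int N = 1 mod int N"
    using assms by simp
  then show "0 \<le> s \<and> s < int N \<and> int N dvd int E * s"
    using s by (auto simp: soc1_def mod_eq_dvd_iff)
next
  assume s: "0 \<le> s \<and> s < int N \<and> int N dvd int E * s"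
  then obtain k where k: "int E * s = int N * k"
    by (auto elim: dvdE)
  have "(- s + (s + y + int E * s * y)) mod int N = y" if "y \<in> {0..<int N}" for y
  proof -
    have "- s + (s + y + int E * s * y) = y + (k * y) * int N"
      using k by (simp add: algebra_simps)
    moreover have "0 \<le> y" "y < int N"
      using that by auto
    ultimately show ?thesis
      by (simp only: mod_mult_self1 mod_pos_pos_trivial)
  qed
  then show "s \<in> soc1 N E"
    using s by (auto simp: soc1_def)
qed

lemma card_soc1_prime_power:
  assumes q: "(q::nat) > 1" and t: "1 \<le> t" "t \<le> g"
  shows "card (soc1 (q ^ g) (q ^ t)) = q ^ t"
proof -
  define M where "M = q ^ (g - t)"
  have NM: "q ^ g = q ^ t * M"
    unfolding M_def using t by (simp add: power_add[symmetric])
  have N: "q ^ g > 1"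
    using q t by (intro one_less_power) auto
  have M_pos: "M > 0"
    using q M_def by simp
  have "s \<in> soc1 (q ^ g) (q ^ t) \<longleftrightarrow> s \<in> (\<lambda>k. int M * k) ` {0..<int (q ^ t)}" for s
  proof -
    have "int (q ^ g) dvd int (q ^ t) * s \<longleftrightarrow> int M dvd s"
      using q NM by (simp del: of_nat_power)
    moreover have "(0 \<le> s \<and> s < int (q ^ g) \<and> int M dvd s) \<longleftrightarrow> s \<in> (\<lambda>k. int M * k) ` {0..<int (q ^ t)}"
    proof
      assume "0 \<le> s \<and> s < int (q ^ g) \<and> int M dvd s"
      moreover from this obtain k where "s = int M * k"
        by (auto elim: dvdE)
      ultimately show "s \<in> (\<lambda>k. int M * k) ` {0..<int (q ^ t)}"
        using M_pos NM by (auto simp: zero_le_mult_iff simp del: of_nat_power)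
    next
      assume "s \<in> (\<lambda>k. int M * k) ` {0..<int (q ^ t)}"
      then show "0 \<le> s \<and> s < int (q ^ g) \<and> int M dvd s"
        using M_pos NM by (auto simp del: of_nat_power)
    qed
    ultimately show ?thesis
      using soc1_iff[OF N] by blast
  qed
  then have "soc1 (q ^ g) (q ^ t) = (\<lambda>k. int M * k) ` {0..<int (q ^ t)}"
    by blast
  moreover have "inj_on (\<lambda>k. int M * k) {0..<int (q ^ t)}"
    using M_pos by (auto simp: inj_on_def)
  ultimately show ?thesis
    by (simp add: card_image del: of_nat_power)
qed

text \<open>Compatibility of multiplication by \<open>u\<close> with \<open>1 \<circ> 1\<close> reads \<open>u (2 + E) \<equiv> 2 u + E u\<^sup>2\<close>,
  i.e. \<open>E u (u - 1) \<equiv> 0\<close>.\<close>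

lemma tup_scalar_circ_hom_dvd:
  assumes "j \<in> I" "coprime u (int (N j))"
    and "tup_mul I N (\<lambda>_. u) (tup_circ I N E (emb j 1) (emb j 1))
       = tup_circ I N E (tup_mul I N (\<lambda>_. u) (emb j 1)) (tup_mul I N (\<lambda>_. u) (emb j 1))"
  shows "int (N j) dvd int (E j) * (u - 1)"
proof -
  have "(u * ((1 + 1 + int (E j) * 1 * 1) mod int (N j))) mod int (N j)
      = ((u * 1) mod int (N j) + (u * 1) mod int (N j)
        + int (E j) * ((u * 1) mod int (N j)) * ((u * 1) mod int (N j))) mod int (N j)"
    using fun_cong[OF assms(3), of j]
    unfolding tup_circ_emb[OF assms(1)] tup_mul_emb[OF assms(1)] tup_circ_emb[OF assms(1)] emb_apply .
  then have "[u * ((1 + 1 + int (E j) * 1 * 1) mod int (N j)) = (u * 1) mod int (N j) + (u * 1) mod int (N j)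
        + int (E j) * ((u * 1) mod int (N j)) * ((u * 1) mod int (N j))] (mod int (N j))"
    unfolding cong_def .
  moreover have "[u * (2 + int (E j)) = u * ((1 + 1 + int (E j) * 1 * 1) mod int (N j))] (mod int (N j))"
    by (simp add: cong_def mod_mult_right_eq)
  moreover have "[(u * 1) mod int (N j) + (u * 1) mod int (N j)
        + int (E j) * ((u * 1) mod int (N j)) * ((u * 1) mod int (N j)) = u + u + int (E j) * u * u] (mod int (N j))"
    by (intro cong_add cong_mult cong_refl) (simp_all add: cong_def)
  ultimately have "[u * (2 + int (E j)) = u + u + int (E j) * u * u] (mod int (N j))"
    using cong_trans by blast
  then have "int (N j) dvd (u + u + int (E j) * u * u) - u * (2 + int (E j))"
    by (simp add: cong_iff_dvd_diff dvd_diff_commute)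
  moreover have "(u + u + int (E j) * u * u) - u * (2 + int (E j)) = u * (int (E j) * (u - 1))"
    by (simp add: algebra_simps)
  ultimately show ?thesis
    using assms(2) by (simp add: coprime_commute coprime_dvd_mult_right_iff)
qed

lemma socle_factor:
  assumes "N > 1" "int N dvd int E * (u - 1)"
  shows "(u - 1) mod int N \<in> soc1 N E"
    and "((1 + int E * w) * ((u * a) mod int N)) mod int N
       = ((1 + (u - 1) mod int N) * (1 + int E * w) * a) mod int N"
proof -
  have "int N dvd int E * ((u - 1) mod int N)"
    using assms(2) by (metis dvd_mod_iff mod_mult_right_eq dvd_eq_mod_eq_0)
  then show "(u - 1) mod int N \<in> soc1 N E"
    using soc1_iff[OF assms(1)] assms(1) by simp
  have "[(1 + (u - 1) mod int N) * (1 + int E * w) * a = (1 + (u - 1)) * (1 + int E * w) * a] (mod int N)"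
    by (intro cong_mult cong_add cong_refl) (simp add: cong_def)
  moreover have "(1 + (u - 1)) * (1 + int E * w) * a = (1 + int E * w) * (u * a)"
    by (simp add: algebra_simps)
  ultimately show "((1 + int E * w) * ((u * a) mod int N)) mod int N
       = ((1 + (u - 1) mod int N) * (1 + int E * w) * a) mod int N"
    unfolding cong_def by (simp add: mod_mult_right_eq ac_simps)
qed

section \<open>The decomposed brace\<close>

locale brace_decomposition =
  fixes v m r :: nat and NA EA NB EB :: "nat \<Rightarrow> nat"
    and \<alpha> :: "(nat \<Rightarrow> int) \<Rightarrow> (nat \<Rightarrow> int) \<Rightarrow> (nat \<Rightarrow> int)"
  assumes m_le_r: "m \<le> r"
    and NA_gt1: "\<forall>i\<in>{1..v}. NA i > 1" and NB_gt1: "\<forall>j\<in>{1..r}. NB j > 1"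
    and EA_unit: "\<forall>i\<in>{1..v}. \<forall>z. coprime (1 + int (EA i) * z) (int (NA i))"
    and EB_unit: "\<forall>j\<in>{1..m}. \<forall>z. coprime (1 + int (EB j) * z) (int (NB j))"
    and \<alpha>_aut: "\<forall>x\<in>tup_car {1..m} NB. add_aut {m+1..r} NB (\<alpha> x)"
    and \<alpha>_hom: "\<forall>x\<in>tup_car {1..m} NB. \<forall>y\<in>tup_car {1..m} NB. \<forall>z\<in>tup_car {m+1..r} NB.
                  \<alpha> (tup_circ {1..m} NB EB x y) z = \<alpha> x (\<alpha> y z)"
    and NA_coprime: "\<forall>i\<in>{1..v}. \<forall>k\<in>{1..v}. i \<noteq> k \<longrightarrow> coprime (NA i) (NA k)"
    and NB_coprime: "\<forall>i\<in>{1..r}. \<forall>k\<in>{1..r}. i \<noteq> k \<longrightarrow> coprime (NB i) (NB k)"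
    and NA_NB_coprime: "\<forall>i\<in>{1..v}. \<forall>k\<in>{1..r}. coprime (NA i) (NB k)"
begin

text \<open>Index sets and carriers of the coordinates \<open>a\<close>, \<open>b\<close>, \<open>c\<close> of an element \<open>(a, b, c)\<close>; note that
  \<open>IC\<close>, not \<open>IB\<close>, indexes \<open>B\<^sub>1, \<dots>, B\<^sub>m\<close>.\<close>

abbreviation "IA \<equiv> {1..v}"
abbreviation "IB \<equiv> {m+1..r}"
abbreviation "IC \<equiv> {1..m}"
abbreviation "TA \<equiv> tup_car IA NA"
abbreviation "TB \<equiv> tup_car IB NB"
abbreviation "TC \<equiv> tup_car IC NB"
abbreviation "Car \<equiv> br_car v m r NA NB"
abbreviation "add \<equiv> br_add v m r NA NB"
abbreviation "neg \<equiv> br_neg v m r NA NB"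
abbreviation "circ \<equiv> br_circ v m r NA EA NB EB \<alpha>"

lemma NA_pos: "\<forall>i\<in>IA. NA i > 0"
  using NA_gt1 by auto

lemma NB_gt1_B: "\<forall>j\<in>IB. NB j > 1"
  using NB_gt1 by auto

lemma NB_gt1_C: "\<forall>j\<in>IC. NB j > 1"
  using NB_gt1 m_le_r by auto

lemma NB_pos: "\<forall>j\<in>IB. NB j > 0" "\<forall>j\<in>IC. NB j > 0"
  using NB_gt1_B NB_gt1_C by auto

lemma br_car_iff [simp]: "(a, b, c) \<in> Car \<longleftrightarrow> a \<in> TA \<and> b \<in> TB \<and> c \<in> TC"
  by (simp add: br_car_def)

lemma br_add_eq [simp]:
  "add (a, b, c) (a', b', c') = (tup_add IA NA a a', tup_add IB NB b b', tup_add IC NB c c')"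
  by (simp add: br_add_def)

lemma br_neg_eq [simp]: "neg (a, b, c) = (tup_neg IA NA a, tup_neg IB NB b, tup_neg IC NB c)"
  by (simp add: br_neg_def)

lemma br_circ_eq [simp]:
  "circ (a, b, c) (a', b', c') = (tup_circ IA NA EA a a', tup_add IB NB b (\<alpha> c b'), tup_circ IC NB EB c c')"
  by (simp add: br_circ_def)

lemma br_zero_eq: "br_zero = (\<lambda>_. 0, \<lambda>_. 0, \<lambda>_. 0)"
  by (simp add: br_zero_def)

lemma Car_cases:
  assumes "x \<in> Car"
  obtains a b c where "x = (a, b, c)" "a \<in> TA" "b \<in> TB" "c \<in> TC"
  using assms by (cases x) auto

lemma zero_in_Car: "br_zero \<in> Car"
  using tup_zero_closed NA_pos NB_pos by (simp add: br_zero_eq)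

lemma \<alpha>_closed: "c \<in> TC \<Longrightarrow> b \<in> TB \<Longrightarrow> \<alpha> c b \<in> TB"
  using \<alpha>_aut unfolding add_aut_def bij_betw_def by blast

lemma \<alpha>_add: "c \<in> TC \<Longrightarrow> b \<in> TB \<Longrightarrow> b' \<in> TB \<Longrightarrow> \<alpha> c (tup_add IB NB b b') = tup_add IB NB (\<alpha> c b) (\<alpha> c b')"
  using \<alpha>_aut unfolding add_aut_def by blast

lemma \<alpha>_inj: "c \<in> TC \<Longrightarrow> inj_on (\<alpha> c) TB"
  using \<alpha>_aut unfolding add_aut_def bij_betw_def by blast

lemma \<alpha>_circ: "c \<in> TC \<Longrightarrow> c' \<in> TC \<Longrightarrow> b \<in> TB \<Longrightarrow> \<alpha> (tup_circ IC NB EB c c') b = \<alpha> c (\<alpha> c' b)"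
  using \<alpha>_hom by blast

lemma \<alpha>_zero: "c \<in> TC \<Longrightarrow> \<alpha> c (\<lambda>_. 0) = (\<lambda>_. 0)"
  using tup_additive_zero[OF NB_pos(1)] \<alpha>_closed \<alpha>_add by blast

lemma \<alpha>_neg: assumes "c \<in> TC" "b \<in> TB" shows "\<alpha> c (tup_neg IB NB b) = tup_neg IB NB (\<alpha> c b)"
proof -
  have "tup_add IB NB (\<alpha> c b) (\<alpha> c (tup_neg IB NB b)) = \<alpha> c (tup_add IB NB b (tup_neg IB NB b))"
    using \<alpha>_add[OF assms tup_neg_closed[OF NB_pos(1), of b]] by simp
  also have "\<dots> = tup_add IB NB (\<alpha> c b) (tup_neg IB NB (\<alpha> c b))"
    using \<alpha>_zero[OF assms(1)] tup_add_neg by simp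
  finally show ?thesis
    using tup_add_left_cancel \<alpha>_closed assms tup_neg_closed[OF NB_pos(1)] by metis
qed

lemma \<alpha>_zero_left: assumes "b \<in> TB" shows "\<alpha> (\<lambda>_. 0) b = b"
proof -
  have z: "(\<lambda>_. 0) \<in> TC"
    using tup_zero_closed[OF NB_pos(2)] .
  have "tup_circ IC NB EB (\<lambda>_. 0) (\<lambda>_. 0) = (\<lambda>_. 0)"
    by (auto simp: tup_circ_def)
  then have "\<alpha> (\<lambda>_. 0) (\<alpha> (\<lambda>_. 0) b) = \<alpha> (\<lambda>_. 0) b"
    using \<alpha>_circ[OF z z assms] by simp
  then show ?thesis
    using \<alpha>_inj[OF z] assms \<alpha>_closed[OF z] unfolding inj_on_def by metis
qed

lemma \<alpha>_diagonal: "c \<in> TC \<Longrightarrow> b \<in> TB \<Longrightarrow> \<alpha> c b = tup_mul IB NB (\<alpha> c (\<lambda>i. of_bool (i \<in> IB))) b"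
  using tup_additive_eq_tup_mul[of IB NB "\<alpha> c" b] NB_gt1_B NB_coprime \<alpha>_closed \<alpha>_add by auto

lemma \<alpha>_tup_mul: "c \<in> TC \<Longrightarrow> b \<in> TB \<Longrightarrow> \<alpha> c (tup_mul IB NB u b) = tup_mul IB NB u (\<alpha> c b)"
  using tup_additive_tup_mul_commute[of IB NB "\<alpha> c" b u] NB_gt1_B NB_coprime \<alpha>_closed \<alpha>_add by auto

lemma br_funpow_add:
  assumes "(a, b, c) \<in> Car"
  shows "(add (a, b, c) ^^ n) br_zero
    = (tup_mul IA NA (\<lambda>_. int n) a, tup_mul IB NB (\<lambda>_. int n) b, tup_mul IC NB (\<lambda>_. int n) c)"
proof -
  have "(add (a, b, c) ^^ n) br_zero
      = ((tup_add IA NA a ^^ n) (\<lambda>_. 0), (tup_add IB NB b ^^ n) (\<lambda>_. 0), (tup_add IC NB c ^^ n) (\<lambda>_. 0))"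
    by (induction n) (simp_all add: br_zero_eq)
  then show ?thesis
    using assms tup_funpow_add NA_pos NB_pos by simp
qed

lemma br_circ_assoc:
  assumes "(a, b, c) \<in> Car" "(a', b', c') \<in> Car" "(a'', b'', c'') \<in> Car"
  shows "circ (circ (a, b, c) (a', b', c')) (a'', b'', c'') = circ (a, b, c) (circ (a', b', c') (a'', b'', c''))"
proof -
  have "tup_add IB NB (tup_add IB NB b (\<alpha> c b')) (\<alpha> (tup_circ IC NB EB c c') b'')
      = tup_add IB NB b (\<alpha> c (tup_add IB NB b' (\<alpha> c' b'')))"
    using \<alpha>_circ \<alpha>_add \<alpha>_closed tup_add_assoc assms by simp
  then show ?thesis
    by (simp add: tup_circ_assoc)
qed

lemma br_circ_inverse_ex:
  assumes "(a, b, c) \<in> Car"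
  shows "\<exists>y\<in>Car. circ (a, b, c) y = br_zero \<and> circ y (a, b, c) = br_zero"
proof -
  obtain a' where a': "a' \<in> TA" "tup_circ IA NA EA a a' = (\<lambda>_. 0)" "tup_circ IA NA EA a' a = (\<lambda>_. 0)"
    using tup_circ_inverse_ex[OF NA_pos EA_unit] assms by auto
  obtain c' where c': "c' \<in> TC" "tup_circ IC NB EB c c' = (\<lambda>_. 0)" "tup_circ IC NB EB c' c = (\<lambda>_. 0)"
    using tup_circ_inverse_ex[OF NB_pos(2) EB_unit] assms by auto
  define b' where "b' = tup_neg IB NB (\<alpha> c' b)"
  have "\<alpha> c (\<alpha> c' b) = b"
    using \<alpha>_circ[of c c' b, symmetric] c' \<alpha>_zero_left assms by simp
  then have "tup_add IB NB b (\<alpha> c b') = (\<lambda>_. 0)"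
    unfolding b'_def using \<alpha>_neg \<alpha>_closed c'(1) tup_add_neg assms by simp
  moreover have "tup_add IB NB b' (\<alpha> c' b) = (\<lambda>_. 0)"
    unfolding b'_def using tup_add_commute tup_add_neg by metis
  moreover have "b' \<in> TB"
    using tup_neg_closed[OF NB_pos(1)] b'_def by simp
  ultimately show ?thesis
    using a' c' by (intro bexI[of _ "(a', b', c')"]) (simp_all add: br_zero_eq)
qed

lemma br_circ_add_distrib:
  assumes "(a, b, c) \<in> Car" "(a', b', c') \<in> Car" "(a'', b'', c'') \<in> Car"
  shows "circ (a, b, c) (add (a', b', c') (a'', b'', c''))
    = add (add (circ (a, b, c) (a', b', c')) (neg (a, b, c))) (circ (a, b, c) (a'', b'', c''))"
proof -
  have "[b i + (x1 i + x2 i) mod int (NB i)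
      = ((b i + x1 i) mod int (NB i) + - b i mod int (NB i)) mod int (NB i) + (b i + x2 i) mod int (NB i)]
      (mod int (NB i))" for x1 x2 i
  proof -
    have "[b i + (x1 i + x2 i) mod int (NB i) = (b i + x1 i) + - b i + (b i + x2 i)] (mod int (NB i))"
      by (simp add: cong_def mod_simps algebra_simps)
    moreover have "[((b i + x1 i) mod int (NB i) + - b i mod int (NB i)) mod int (NB i) + (b i + x2 i) mod int (NB i)
        = (b i + x1 i) + - b i + (b i + x2 i)] (mod int (NB i))"
      by (simp add: cong_def mod_simps)
    ultimately show ?thesis
      by (metis cong_sym cong_trans)
  qed
  then have "tup_add IB NB b (tup_add IB NB x1 x2)
    = tup_add IB NB (tup_add IB NB (tup_add IB NB b x1) (tup_neg IB NB b)) (tup_add IB NB b x2)" for x1 x2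
    by (auto simp: tup_add_def tup_neg_def fun_eq_iff cong_def)
  then show ?thesis
    using assms \<alpha>_add by (simp add: tup_circ_add_distrib)
qed

lemma br_neg_funpow: "\<exists>K. \<forall>x\<in>Car. neg x = (add x ^^ K) br_zero"
proof -
  define L where "L = (\<Prod>i\<in>IA. NA i) * (\<Prod>j\<in>{1..r}. NB j)"
  have "L > 0"
    unfolding L_def using NA_gt1 NB_gt1 by (auto intro!: prod_pos)
  have "NA i dvd L" if "i \<in> IA" for i
    unfolding L_def using that by (intro dvd_mult2 dvd_prodI) auto
  moreover have "NB j dvd L" if "j \<in> {1..r}" for j
    unfolding L_def using that by (intro dvd_mult dvd_prodI) auto
  ultimately have "\<forall>i\<in>IA. NA i dvd L" "\<forall>j\<in>IB. NB j dvd L" "\<forall>j\<in>IC. NB j dvd L"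
    using m_le_r by auto
  then have "neg x = (add x ^^ (L - 1)) br_zero" if "x \<in> Car" for x
    using that \<open>L > 0\<close> by (elim Car_cases) (simp add: br_funpow_add tup_neg_eq_tup_mul)
  then show ?thesis
    by blast
qed

sublocale left_brace Car add neg br_zero circ
proof unfold_locales
  fix x y w assume "x \<in> Car" "y \<in> Car" "w \<in> Car"
  then show "add (add x y) w = add x (add y w)"
    and "circ (circ x y) w = circ x (circ y w)"
    and "circ x (add y w) = add (add (circ x y) (neg x)) (circ x w)"
    by (auto elim!: Car_cases simp del: br_circ_eq br_add_eq br_neg_eq
        simp add: br_circ_assoc br_circ_add_distrib) (simp add: tup_add_assoc)
next
  fix x y assume "x \<in> Car" "y \<in> Car"
  then show "add x y \<in> Car" and "add x y = add y x" and "circ x y \<in> Car"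
    by (auto elim!: Car_cases simp: tup_add_closed tup_circ_closed tup_add_commute NA_pos NB_pos)
next
  fix x assume "x \<in> Car"
  then show "neg x \<in> Car" and "add x br_zero = x" and "add x (neg x) = br_zero"
    and "circ x br_zero = x" and "circ br_zero x = x"
    and "\<exists>y\<in>Car. circ x y = br_zero \<and> circ y x = br_zero"
    by (auto elim!: Car_cases simp: br_zero_eq tup_neg_closed tup_add_zero tup_add_neg tup_circ_zero
        tup_zero_circ tup_zero_add \<alpha>_zero \<alpha>_zero_left NA_pos NB_pos br_circ_inverse_ex[simplified br_zero_eq])
qed (use zero_in_Car br_neg_funpow in blast)+

lemma lmap_eq:
  assumes "(xa, xb, xc) \<in> Car" "(ya, yb, yc) \<in> Car"
  shows "lmap (xa, xb, xc) (ya, yb, yc)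
    = (tup_mul IA NA (\<lambda>i. 1 + int (EA i) * xa i) ya, \<alpha> xc yb, tup_mul IC NB (\<lambda>i. 1 + int (EB i) * xc i) yc)"
proof -
  have "tup_add IB NB (tup_neg IB NB xb) (tup_add IB NB xb (\<alpha> xc yb))
      = tup_add IB NB (tup_add IB NB xb (tup_neg IB NB xb)) (\<alpha> xc yb)"
    by (metis tup_add_assoc tup_add_commute)
  also have "\<dots> = \<alpha> xc yb"
    using tup_add_neg tup_zero_add \<alpha>_closed assms by simp
  finally show ?thesis
    using tup_lam_eq[of IA NA EA xa ya] tup_lam_eq[of IC NB EB xc yc] unfolding lam_def by simp
qed

definition gen_one :: belt where
  "gen_one = (\<lambda>i. of_bool (i \<in> IA), \<lambda>i. of_bool (i \<in> IB), \<lambda>i. of_bool (i \<in> IC))"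

lemma gen_one_in_Car: "gen_one \<in> Car"
proof -
  have "(\<lambda>i. of_bool (i \<in> IA)) \<in> TA" "(\<lambda>i. of_bool (i \<in> IB)) \<in> TB" "(\<lambda>i. of_bool (i \<in> IC)) \<in> TC"
    using tup_one_closed NA_gt1 NB_gt1_B NB_gt1_C by blast+
  then show ?thesis
    unfolding gen_one_def by (simp only: br_car_iff)
qed

lemma Car_chinese_remainder:
  assumes "(a, b, c) \<in> Car"
  obtains n where "\<forall>i\<in>IA. [int n = a i] (mod int (NA i))" "\<forall>j\<in>IB. [int n = b j] (mod int (NB j))"
    "\<forall>j\<in>IC. [int n = c j] (mod int (NB j))"
proof -
  define J where "J = Inl ` IA \<union> Inr ` {1..r}"
  define M where "M = case_sum NA NB"
  have "finite J"
    unfolding J_def by simp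
  moreover have "\<forall>s\<in>J. M s > 0"
    using NA_gt1 NB_gt1 unfolding J_def M_def by auto
  moreover have "\<forall>s\<in>J. \<forall>t\<in>J. s \<noteq> t \<longrightarrow> coprime (M s) (M t)"
    using NA_coprime NB_coprime NA_NB_coprime unfolding J_def M_def
    by (auto simp: coprime_commute simp del: atLeastAtMost_iff) blast+
  ultimately obtain n where n: "\<forall>s\<in>J. [int n = case_sum a (\<lambda>j. if j \<le> m then c j else b j) s] (mod int (M s))"
    by (blast dest: chinese_remainder_int)
  have "[int n = b j] (mod int (NB j))" if "j \<in> IB" for j
    using n[rule_format, of "Inr j"] that unfolding J_def M_def by simp
  moreover have "[int n = c j] (mod int (NB j))" if "j \<in> IC" for j
    using n[rule_format, of "Inr j"] that m_le_r unfolding J_def M_def by simp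
  moreover have "[int n = a i] (mod int (NA i))" if "i \<in> IA" for i
    using n[rule_format, of "Inl i"] that unfolding J_def M_def by simp
  ultimately show ?thesis
    using that by blast
qed

lemma funpow_gen_one:
  assumes "(a, b, c) \<in> Car" "\<forall>i\<in>IA. [int n = a i] (mod int (NA i))"
    "\<forall>j\<in>IB. [int n = b j] (mod int (NB j))" "\<forall>j\<in>IC. [int n = c j] (mod int (NB j))"
  shows "(add gen_one ^^ n) br_zero = (a, b, c)"
  using assms br_funpow_add[OF gen_one_in_Car[unfolded gen_one_def]]
  by (simp add: gen_one_def tup_mul_one cong: tup_mul_cong)

definition br_mul :: "(nat \<Rightarrow> int) \<Rightarrow> (nat \<Rightarrow> int) \<Rightarrow> (nat \<Rightarrow> int) \<Rightarrow> belt \<Rightarrow> belt" where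
  "br_mul uA uB uC = (\<lambda>(a, b, c). (tup_mul IA NA uA a, tup_mul IB NB uB b, tup_mul IC NB uC c))"

lemma br_mul_eq [simp]:
  "br_mul uA uB uC (a, b, c) = (tup_mul IA NA uA a, tup_mul IB NB uB b, tup_mul IC NB uC c)"
  by (simp add: br_mul_def)

lemma br_mul_closed: "br_mul uA uB uC x \<in> Car"
  using tup_mul_closed NA_pos NB_pos by (cases x) simp

text \<open>By \<open>Car_chinese_remainder\<close>, \<open>gen_one\<close> generates the additive group.\<close>

lemma additive_eq_scalar:
  assumes closed: "\<forall>x\<in>Car. \<phi> x \<in> Car" and additive: "\<forall>x\<in>Car. \<forall>y\<in>Car. \<phi> (add x y) = add (\<phi> x) (\<phi> y)"
  obtains k :: int where "\<forall>x\<in>Car. \<phi> x = br_mul (\<lambda>_. k) (\<lambda>_. k) (\<lambda>_. k) x"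
proof -
  obtain pa pb pc where p: "\<phi> gen_one = (pa, pb, pc)" "(pa, pb, pc) \<in> Car"
    using closed gen_one_in_Car by (metis prod_cases3)
  obtain k where k: "\<forall>i\<in>IA. [int k = pa i] (mod int (NA i))" "\<forall>j\<in>IB. [int k = pb j] (mod int (NB j))"
    "\<forall>j\<in>IC. [int k = pc j] (mod int (NB j))"
    using Car_chinese_remainder[OF p(2)] by blast
  have "\<phi> x = br_mul (\<lambda>_. int k) (\<lambda>_. int k) (\<lambda>_. int k) x" if x: "x \<in> Car" for x
  proof -
    obtain a b c where abc: "x = (a, b, c)" "(a, b, c) \<in> Car"
      using x by (metis prod_cases3)
    obtain n where n: "\<forall>i\<in>IA. [int n = a i] (mod int (NA i))" "\<forall>j\<in>IB. [int n = b j] (mod int (NB j))"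
      "\<forall>j\<in>IC. [int n = c j] (mod int (NB j))"
      using Car_chinese_remainder[OF abc(2)] by blast
    have "\<phi> ((add gen_one ^^ n) br_zero) = (add (\<phi> gen_one) ^^ n) (\<phi> br_zero)"
      by (rule funpow_hom) (use additive gen_one_in_Car add_closed zero_in_Car in auto)
    then have "\<phi> x = (add (\<phi> gen_one) ^^ n) (\<phi> br_zero)"
      using funpow_gen_one[OF abc(2) n] abc(1) by simp
    also have "\<dots> = (tup_mul IA NA (\<lambda>_. int n) pa, tup_mul IB NB (\<lambda>_. int n) pb, tup_mul IC NB (\<lambda>_. int n) pc)"
      using additive_zero[OF closed additive] br_funpow_add p by simp
    also have "\<dots> = br_mul (\<lambda>_. int k) (\<lambda>_. int k) (\<lambda>_. int k) x"
    proof -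
      have "tup_mul I N (\<lambda>_. int n) y = tup_mul I N (\<lambda>_. int k) z"
        if "y \<in> tup_car I N" "z \<in> tup_car I N" "\<forall>i\<in>I. [int k = y i] (mod int (N i))"
          "\<forall>i\<in>I. [int n = z i] (mod int (N i))" for I N y z
      proof -
        let ?one = "\<lambda>i. of_bool (i \<in> I) :: int"
        have "tup_mul I N (\<lambda>_. int n) y = tup_mul I N (\<lambda>_. int n) (tup_mul I N (\<lambda>_. int k) ?one)"
          using that(1,3) tup_mul_one tup_mul_cong by (metis cong_sym)
        also have "\<dots> = tup_mul I N (\<lambda>_. int k) (tup_mul I N (\<lambda>_. int n) ?one)"
          by (rule tup_mul_commute)
        also have "\<dots> = tup_mul I N (\<lambda>_. int k) z"
          using that(2,4) tup_mul_one tup_mul_cong by metis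
        finally show ?thesis .
      qed
      then show ?thesis
        using p(2) abc k n by simp
    qed
    finally show ?thesis .
  qed
  then show ?thesis
    using that by blast
qed

lemma transitive_cycle_base_units:
  assumes tcb: "transitive_cycle_base Car add neg br_zero circ T" and "(ta, tb, tc) \<in> T"
  shows "\<forall>j\<in>IA. coprime (ta j) (int (NA j))" "\<forall>j\<in>IB. coprime (tb j) (int (NB j))"
    "\<forall>j\<in>IC. coprime (tc j) (int (NB j))"
proof -
  have e: "(emb j 1, \<lambda>_. 0, \<lambda>_. 0) \<in> Car" if "j \<in> IA" for j
    using that emb_closed NA_gt1 tup_zero_closed NA_pos NB_pos by simp
  show "\<forall>j\<in>IA. coprime (ta j) (int (NA j))"
  proof
    fix j assume j: "j \<in> IA"
    have "coprime ((\<lambda>x. fst x j) (ta, tb, tc)) (int (NA j))"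
    proof (rule transitive_cycle_base_coordinate_coprime[OF tcb \<open>(ta, tb, tc) \<in> T\<close> _ _ _ _ e[OF j]])
      show "\<forall>x\<in>Car. \<forall>y\<in>Car. \<exists>\<mu>. fst (lmap x y) j = (\<mu> * fst y j) mod int (NA j)"
        using j by (auto elim!: Car_cases simp: lmap_eq tup_mul_def)
    qed (use j in \<open>auto elim!: Car_cases simp: tup_add_def tup_neg_def br_zero_eq emb_def\<close>)
    then show "coprime (ta j) (int (NA j))"
      by simp
  qed
  have e: "(\<lambda>_. 0, emb j 1, \<lambda>_. 0) \<in> Car" if "j \<in> IB" for j
    using that emb_closed NB_gt1_B tup_zero_closed NA_pos NB_pos by simp
  show "\<forall>j\<in>IB. coprime (tb j) (int (NB j))"
  proof
    fix j assume j: "j \<in> IB"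
    have "coprime ((\<lambda>x. fst (snd x) j) (ta, tb, tc)) (int (NB j))"
    proof (rule transitive_cycle_base_coordinate_coprime[OF tcb \<open>(ta, tb, tc) \<in> T\<close> _ _ _ _ e[OF j]])
      show "\<forall>x\<in>Car. \<forall>y\<in>Car. \<exists>\<mu>. fst (snd (lmap x y)) j = (\<mu> * fst (snd y) j) mod int (NB j)"
        using j \<alpha>_diagonal by (auto elim!: Car_cases simp: lmap_eq tup_mul_def)
    qed (use j in \<open>auto elim!: Car_cases simp: tup_add_def tup_neg_def br_zero_eq emb_def\<close>)
    then show "coprime (tb j) (int (NB j))"
      by simp
  qed
  have e: "(\<lambda>_. 0, \<lambda>_. 0, emb j 1) \<in> Car" if "j \<in> IC" for j
    using that emb_closed NB_gt1_C tup_zero_closed NA_pos NB_pos by simp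
  show "\<forall>j\<in>IC. coprime (tc j) (int (NB j))"
  proof
    fix j assume j: "j \<in> IC"
    have "coprime ((\<lambda>x. snd (snd x) j) (ta, tb, tc)) (int (NB j))"
    proof (rule transitive_cycle_base_coordinate_coprime[OF tcb \<open>(ta, tb, tc) \<in> T\<close> _ _ _ _ e[OF j]])
      show "\<forall>x\<in>Car. \<forall>y\<in>Car. \<exists>\<mu>. snd (snd (lmap x y)) j = (\<mu> * snd (snd y) j) mod int (NB j)"
        using j by (auto elim!: Car_cases simp: lmap_eq tup_mul_def)
    qed (use j in \<open>auto elim!: Car_cases simp: tup_add_def tup_neg_def br_zero_eq emb_def\<close>)
    then show "coprime (tc j) (int (NB j))"
      by simp
  qed
qed

lemma scalar_surj_components:
  fixes k :: int
  assumes surj: "\<forall>y\<in>Car. \<exists>x\<in>Car. br_mul (\<lambda>_. k) (\<lambda>_. k) (\<lambda>_. k) x = y"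
  shows "\<forall>y\<in>TA. \<exists>x\<in>TA. tup_mul IA NA (\<lambda>_. k) x = y" "\<forall>y\<in>TB. \<exists>x\<in>TB. tup_mul IB NB (\<lambda>_. k) x = y"
    "\<forall>y\<in>TC. \<exists>x\<in>TC. tup_mul IC NB (\<lambda>_. k) x = y"
proof -
  have z: "(\<lambda>_. 0) \<in> TA" "(\<lambda>_. 0) \<in> TB" "(\<lambda>_. 0) \<in> TC"
    using tup_zero_closed NA_pos NB_pos by blast+
  have pre: "\<exists>xa xb xc. (xa, xb, xc) \<in> Car \<and> (tup_mul IA NA (\<lambda>_. k) xa, tup_mul IB NB (\<lambda>_. k) xb,
      tup_mul IC NB (\<lambda>_. k) xc) = y" if "y \<in> Car" for y
    using surj that by (metis br_mul_eq prod_cases3)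
  show "\<forall>y\<in>TA. \<exists>x\<in>TA. tup_mul IA NA (\<lambda>_. k) x = y"
    using pre z by (metis br_car_iff prod.inject)
  show "\<forall>y\<in>TB. \<exists>x\<in>TB. tup_mul IB NB (\<lambda>_. k) x = y"
    using pre z by (metis br_car_iff prod.inject)
  show "\<forall>y\<in>TC. \<exists>x\<in>TC. tup_mul IC NB (\<lambda>_. k) x = y"
    using pre z by (metis br_car_iff prod.inject)
qed

lemma scalar_hom_socle:
  fixes k :: int
  defines "\<sigma> \<equiv> br_mul (\<lambda>_. k) (\<lambda>_. k) (\<lambda>_. k)"
  assumes hom: "\<forall>x\<in>Car. \<forall>y\<in>Car. \<sigma> (circ x y) = circ (\<sigma> x) (\<sigma> y)"
    and surj: "\<forall>y\<in>Car. \<exists>x\<in>Car. \<sigma> x = y"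
  shows "\<forall>j\<in>IA. coprime k (int (NA j)) \<and> int (NA j) dvd int (EA j) * (k - 1)"
    and "\<forall>j\<in>IC. coprime k (int (NB j)) \<and> int (NB j) dvd int (EB j) * (k - 1)"
proof -
  have z: "(\<lambda>_. 0) \<in> TA" "(\<lambda>_. 0) \<in> TB" "(\<lambda>_. 0) \<in> TC"
    using tup_zero_closed NA_pos NB_pos by blast+
  have zero_ops: "tup_add IB NB (\<lambda>_. 0) (\<lambda>_. 0) = (\<lambda>_. 0)" "tup_circ I N E (\<lambda>_. 0) (\<lambda>_. 0) = (\<lambda>_. 0)"
    for I N E
    by (auto simp: tup_add_def tup_circ_def)
  show "\<forall>j\<in>IA. coprime k (int (NA j)) \<and> int (NA j) dvd int (EA j) * (k - 1)"
  proof
    fix j assume j: "j \<in> IA"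
    have e: "emb j 1 \<in> TA"
      using emb_closed NA_pos NA_gt1 j by simp
    have unit: "coprime k (int (NA j))"
      using tup_scalar_surj_coprime scalar_surj_components(1) surj NA_gt1 j unfolding \<sigma>_def by blast
    have "\<sigma> (circ (emb j 1, \<lambda>_. 0, \<lambda>_. 0) (emb j 1, \<lambda>_. 0, \<lambda>_. 0))
        = circ (\<sigma> (emb j 1, \<lambda>_. 0, \<lambda>_. 0)) (\<sigma> (emb j 1, \<lambda>_. 0, \<lambda>_. 0))"
      by (rule hom[rule_format]) (use e z in simp_all)
    then have "tup_mul IA NA (\<lambda>_. k) (tup_circ IA NA EA (emb j 1) (emb j 1))
        = tup_circ IA NA EA (tup_mul IA NA (\<lambda>_. k) (emb j 1)) (tup_mul IA NA (\<lambda>_. k) (emb j 1))"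
      unfolding \<sigma>_def by simp
    then show "coprime k (int (NA j)) \<and> int (NA j) dvd int (EA j) * (k - 1)"
      using tup_scalar_circ_hom_dvd[of j IA k NA EA] j unit by blast
  qed
  show "\<forall>j\<in>IC. coprime k (int (NB j)) \<and> int (NB j) dvd int (EB j) * (k - 1)"
  proof
    fix j assume j: "j \<in> IC"
    have e: "emb j 1 \<in> TC"
      using emb_closed NB_pos NB_gt1_C j by simp
    have unit: "coprime k (int (NB j))"
      using tup_scalar_surj_coprime scalar_surj_components(3) surj NB_gt1_C j unfolding \<sigma>_def by blast
    have "\<sigma> (circ (\<lambda>_. 0, \<lambda>_. 0, emb j 1) (\<lambda>_. 0, \<lambda>_. 0, emb j 1))
        = circ (\<sigma> (\<lambda>_. 0, \<lambda>_. 0, emb j 1)) (\<sigma> (\<lambda>_. 0, \<lambda>_. 0, emb j 1))"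
      by (rule hom[rule_format]) (use e z in simp_all)
    then have "tup_mul IC NB (\<lambda>_. k) (tup_circ IC NB EB (emb j 1) (emb j 1))
        = tup_circ IC NB EB (tup_mul IC NB (\<lambda>_. k) (emb j 1)) (tup_mul IC NB (\<lambda>_. k) (emb j 1))"
      unfolding \<sigma>_def by simp
    then show "coprime k (int (NB j)) \<and> int (NB j) dvd int (EB j) * (k - 1)"
      using tup_scalar_circ_hom_dvd[of j IC k NB EB] j unit by blast
  qed
qed

text \<open>Comparing \<open>\<sigma>(e\<^sub>j \<circ> z) = \<sigma>(e\<^sub>j) \<circ> \<sigma>(z)\<close> for \<open>z\<close> in the \<open>B\<close>-part shows that \<open>\<alpha>(e\<^sub>j)\<close>
  and \<open>\<alpha>(k e\<^sub>j)\<close> agree; as \<open>k e\<^sub>j = e\<^sub>j \<circ> s e\<^sub>j\<close> with \<open>s = k - 1\<close> in the socle, \<open>s e\<^sub>j\<close> acts trivially.\<close>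

lemma scalar_hom_kernel:
  fixes k :: int
  defines "\<sigma> \<equiv> br_mul (\<lambda>_. k) (\<lambda>_. k) (\<lambda>_. k)"
  assumes hom: "\<forall>x\<in>Car. \<forall>y\<in>Car. \<sigma> (circ x y) = circ (\<sigma> x) (\<sigma> y)"
    and surj: "\<forall>y\<in>Car. \<exists>x\<in>Car. \<sigma> x = y"
    and "j \<in> IC" "z \<in> TB"
  shows "\<alpha> (emb j ((k - 1) mod int (NB j))) z = z"
proof -
  have z0: "(\<lambda>_. 0) \<in> TA" "(\<lambda>_. 0) \<in> TB" "(\<lambda>_. 0) \<in> TC"
    using tup_zero_closed NA_pos NB_pos by blast+
  have N: "NB j > 1"
    using NB_gt1_C \<open>j \<in> IC\<close> by blast
  define s where "s = (k - 1) mod int (NB j)"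
  have e: "emb j 1 \<in> TC" and es: "emb j s \<in> TC"
    using emb_closed NB_pos N \<open>j \<in> IC\<close> by (simp_all add: s_def)
  have ke: "emb j 1 \<in> TC \<Longrightarrow> tup_mul IC NB (\<lambda>_. k) (emb j 1) \<in> TC"
    using tup_mul_closed NB_pos by blast
  have "int (NB j) dvd int (EB j) * (k - 1)"
    using scalar_hom_socle(2)[OF hom[unfolded \<sigma>_def] surj[unfolded \<sigma>_def]] \<open>j \<in> IC\<close> by blast
  then have "s \<in> soc1 (NB j) (EB j)"
    using socle_factor(1)[OF N] unfolding s_def by blast
  then obtain l where l: "int (EB j) * s = int (NB j) * l"
    using soc1_iff[OF N] by (auto elim: dvdE)
  have "(1 + s + int (EB j) * 1 * s) mod int (NB j) = (k * 1) mod int (NB j)"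
    using l unfolding s_def by (simp add: mod_simps)
  then have k_emb: "tup_mul IC NB (\<lambda>_. k) (emb j 1) = tup_circ IC NB EB (emb j 1) (emb j s)"
    using tup_mul_emb tup_circ_emb \<open>j \<in> IC\<close> by metis
  have shift: "\<alpha> (emb j 1) (tup_mul IB NB (\<lambda>_. k) y) = \<alpha> (emb j 1) (\<alpha> (emb j s) (tup_mul IB NB (\<lambda>_. k) y))"
    if y: "y \<in> TB" for y
  proof -
    have "\<sigma> (circ (\<lambda>_. 0, \<lambda>_. 0, emb j 1) (\<lambda>_. 0, y, \<lambda>_. 0))
        = circ (\<sigma> (\<lambda>_. 0, \<lambda>_. 0, emb j 1)) (\<sigma> (\<lambda>_. 0, y, \<lambda>_. 0))"
      by (rule hom[rule_format]) (use e y z0 in simp_all)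
    then have "tup_mul IB NB (\<lambda>_. k) (\<alpha> (emb j 1) y) = \<alpha> (tup_mul IC NB (\<lambda>_. k) (emb j 1)) (tup_mul IB NB (\<lambda>_. k) y)"
      unfolding \<sigma>_def using \<alpha>_zero z0 y e \<alpha>_closed tup_zero_add tup_mul_closed NB_pos by simp
    then show ?thesis
      using \<alpha>_tup_mul[OF e y] k_emb \<alpha>_circ[OF e es] tup_mul_closed NB_pos by simp
  qed
  obtain y where "y \<in> TB" "tup_mul IB NB (\<lambda>_. k) y = z"
    using scalar_surj_components(2)[OF surj[unfolded \<sigma>_def]] \<open>z \<in> TB\<close> by blast
  then have "\<alpha> (emb j 1) z = \<alpha> (emb j 1) (\<alpha> (emb j s) z)"
    using shift by blast
  then show ?thesis
    using \<alpha>_inj[OF e] \<alpha>_closed[OF es] \<open>z \<in> TB\<close> unfolding inj_on_def s_def by metis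
qed

lemma brace_aut_eq_scalar:
  assumes aut: "brace_aut \<phi>"
  obtains k where "\<forall>x\<in>Car. \<phi> x = br_mul (\<lambda>_. k) (\<lambda>_. k) (\<lambda>_. k) x"
    "\<forall>x\<in>Car. \<forall>y\<in>Car. br_mul (\<lambda>_. k) (\<lambda>_. k) (\<lambda>_. k) (circ x y)
       = circ (br_mul (\<lambda>_. k) (\<lambda>_. k) (\<lambda>_. k) x) (br_mul (\<lambda>_. k) (\<lambda>_. k) (\<lambda>_. k) y)"
    "\<forall>y\<in>Car. \<exists>x\<in>Car. br_mul (\<lambda>_. k) (\<lambda>_. k) (\<lambda>_. k) x = y"
proof -
  have closed: "\<forall>x\<in>Car. \<phi> x \<in> Car"
    using aut brace_aut_closed by blast
  obtain k where k: "\<forall>x\<in>Car. \<phi> x = br_mul (\<lambda>_. k) (\<lambda>_. k) (\<lambda>_. k) x"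
    using additive_eq_scalar[OF closed] aut unfolding brace_aut_def by blast
  have "\<phi> (circ x y) = circ (\<phi> x) (\<phi> y)" if "x \<in> Car" "y \<in> Car" for x y
    using aut that unfolding brace_aut_def by blast
  then have "\<forall>x\<in>Car. \<forall>y\<in>Car. br_mul (\<lambda>_. k) (\<lambda>_. k) (\<lambda>_. k) (circ x y)
       = circ (br_mul (\<lambda>_. k) (\<lambda>_. k) (\<lambda>_. k) x) (br_mul (\<lambda>_. k) (\<lambda>_. k) (\<lambda>_. k) y)"
    using k circ_closed by (metis (no_types, lifting))
  moreover have "\<forall>y\<in>Car. \<exists>x\<in>Car. br_mul (\<lambda>_. k) (\<lambda>_. k) (\<lambda>_. k) x = y"
    using aut k unfolding brace_aut_def bij_betw_def by (metis (no_types, lifting) imageE)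
  ultimately show ?thesis
    using that k by blast
qed

lemma cycle_set_iso_imp_socle_factors:
  assumes g: "(a, b, c) \<in> Car" and g': "(a', b', c') \<in> Car"
    and tcb: "transitive_cycle_base Car add neg br_zero circ T" and "(a, b, c) \<in> T"
    and iso: "cycle_set_iso Car (cyc (a, b, c)) (cyc (a', b', c'))"
  shows "\<forall>j\<in>IA. \<exists>s\<in>soc1 (NA j) (EA j). \<exists>a''\<in>{0..<int (NA j)}.
           a' j = ((1 + s) * (1 + int (EA j) * a'') * a j) mod int (NA j)"
    and "\<forall>j\<in>IC. \<exists>s\<in>soc1 (NB j) (EB j). \<exists>a''\<in>{0..<int (NB j)}. (\<forall>z\<in>TB. \<alpha> (emb j s) z = z) \<and>
           c' j = ((1 + s) * (1 + int (EB j) * a'') * c j) mod int (NB j)"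
proof -
  obtain \<phi> e where aut: "brace_aut \<phi>" and e: "e \<in> Car" and \<phi>_g: "\<phi> (a, b, c) = lmap e (a', b', c')"
    using cycle_set_iso_imp_brace_aut[OF tcb \<open>(a, b, c) \<in> T\<close> g' iso] by blast
  obtain k where k: "\<forall>x\<in>Car. \<phi> x = br_mul (\<lambda>_. k) (\<lambda>_. k) (\<lambda>_. k) x"
    and hom: "\<forall>x\<in>Car. \<forall>y\<in>Car. br_mul (\<lambda>_. k) (\<lambda>_. k) (\<lambda>_. k) (circ x y)
       = circ (br_mul (\<lambda>_. k) (\<lambda>_. k) (\<lambda>_. k) x) (br_mul (\<lambda>_. k) (\<lambda>_. k) (\<lambda>_. k) y)"
    and surj: "\<forall>y\<in>Car. \<exists>x\<in>Car. br_mul (\<lambda>_. k) (\<lambda>_. k) (\<lambda>_. k) x = y"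
    by (rule brace_aut_eq_scalar[OF aut])
  obtain wa wb wc where w: "cinv e = (wa, wb, wc)" "(wa, wb, wc) \<in> Car"
    using cinv e by (metis prod_cases3)
  have "(a', b', c') = lmap (cinv e) (\<phi> (a, b, c))"
    using \<phi>_g lmap_cinv_lmap e g' by simp
  then have a': "a' = tup_mul IA NA (\<lambda>i. 1 + int (EA i) * wa i) (tup_mul IA NA (\<lambda>_. k) a)"
    and c': "c' = tup_mul IC NB (\<lambda>i. 1 + int (EB i) * wc i) (tup_mul IC NB (\<lambda>_. k) c)"
    using lmap_eq[OF w(2), of "tup_mul IA NA (\<lambda>_. k) a" "tup_mul IB NB (\<lambda>_. k) b" "tup_mul IC NB (\<lambda>_. k) c"]
      br_mul_closed[of "\<lambda>_. k" "\<lambda>_. k" "\<lambda>_. k" "(a, b, c)"] w(1) k g by simp_all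
  show "\<forall>j\<in>IA. \<exists>s\<in>soc1 (NA j) (EA j). \<exists>a''\<in>{0..<int (NA j)}.
           a' j = ((1 + s) * (1 + int (EA j) * a'') * a j) mod int (NA j)"
  proof
    fix j assume j: "j \<in> IA"
    have "wa j \<in> {0..<int (NA j)}"
      using tup_car_range[of wa IA NA j] w(2) j by simp
    moreover have "a' j = ((1 + int (EA j) * wa j) * ((k * a j) mod int (NA j))) mod int (NA j)"
      using a' j by (simp add: tup_mul_def)
    ultimately show "\<exists>s\<in>soc1 (NA j) (EA j). \<exists>a''\<in>{0..<int (NA j)}.
           a' j = ((1 + s) * (1 + int (EA j) * a'') * a j) mod int (NA j)"
      using socle_factor[of "NA j" "EA j" k] scalar_hom_socle(1)[OF hom surj] NA_gt1 j by metis
  qed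
  show "\<forall>j\<in>IC. \<exists>s\<in>soc1 (NB j) (EB j). \<exists>a''\<in>{0..<int (NB j)}. (\<forall>z\<in>TB. \<alpha> (emb j s) z = z) \<and>
           c' j = ((1 + s) * (1 + int (EB j) * a'') * c j) mod int (NB j)"
  proof
    fix j assume j: "j \<in> IC"
    have "wc j \<in> {0..<int (NB j)}"
      using tup_car_range[of wc IC NB j] w(2) j by simp
    moreover have "\<forall>z\<in>TB. \<alpha> (emb j ((k - 1) mod int (NB j))) z = z"
      using scalar_hom_kernel[OF hom surj j] by blast
    moreover have "c' j = ((1 + int (EB j) * wc j) * ((k * c j) mod int (NB j))) mod int (NB j)"
      using c' j by (simp add: tup_mul_def)
    ultimately show "\<exists>s\<in>soc1 (NB j) (EB j). \<exists>a''\<in>{0..<int (NB j)}. (\<forall>z\<in>TB. \<alpha> (emb j s) z = z) \<and>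
           c' j = ((1 + s) * (1 + int (EB j) * a'') * c j) mod int (NB j)"
      using socle_factor[of "NB j" "EB j" k] scalar_hom_socle(2)[OF hom surj] NB_gt1_C j by metis
  qed
qed

lemma \<alpha>_kernel_emb_multiple:
  assumes "j \<in> IC" "s \<in> soc1 (NB j) (EB j)" "\<forall>z\<in>TB. \<alpha> (emb j s) z = z" "z \<in> TB"
  shows "\<alpha> (emb j ((s * n) mod int (NB j))) z = z"
proof -
  have N: "NB j > 1"
    using NB_gt1_C assms(1) by blast
  then have s: "0 \<le> s" "s < int (NB j)" "int (NB j) dvd int (EB j) * s"
    using assms(2) soc1_iff by blast+
  then obtain l where l: "int (EB j) * s = int (NB j) * l"
    by (auto elim: dvdE)
  have multiple: "\<alpha> (emb j ((s * int n') mod int (NB j))) z = z" if "z \<in> TB" for n' z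
    using that
  proof (induction n' arbitrary: z)
    case 0
    then show ?case
      using \<alpha>_zero_left by (simp add: emb_def)
  next
    case (Suc n')
    let ?x = "(s * int n') mod int (NB j)"
    have "int (EB j) * s * ?x = int (NB j) * l * ?x"
      by (simp only: l)
    also have "\<dots> = (l * ?x) * int (NB j)"
      by (simp only: ac_simps)
    finally have "(s + ?x + int (EB j) * s * ?x) mod int (NB j) = (s + ?x) mod int (NB j)"
      by (simp only: mod_mult_self1)
    also have "\<dots> = (s * int (Suc n')) mod int (NB j)"
      by (simp add: mod_add_right_eq algebra_simps)
    finally have "emb j ((s * int (Suc n')) mod int (NB j)) = tup_circ IC NB EB (emb j s) (emb j ?x)"
      using tup_circ_emb assms(1) by metis
    moreover have "emb j s \<in> TC" "emb j ?x \<in> TC"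
      using emb_closed NB_pos assms(1) s N by simp_all
    ultimately show ?case
      using \<alpha>_circ \<alpha>_closed Suc assms(3) by simp
  qed
  have "(s * n) mod int (NB j) = (s * int (nat (n mod int (NB j)))) mod int (NB j)"
    using N by (simp add: mod_mult_right_eq)
  then show ?thesis
    using multiple[OF assms(4)] by metis
qed

text \<open>\<open>(1 + s) c = c \<circ> t\<close> where \<open>t\<^sub>j\<close> is a multiple of \<open>s\<^sub>j\<close> (\<open>tup_circ_eq_tup_mul\<close>), and such a \<open>t\<close> is a
  \<open>\<circ>\<close>-product of the \<open>emb j (s\<^sub>j n\<^sub>j)\<close>, all in the kernel of \<open>\<alpha>\<close>.\<close>

lemma \<alpha>_socle_scale:
  assumes s: "\<forall>j\<in>IC. s j \<in> soc1 (NB j) (EB j) \<and> (\<forall>z\<in>TB. \<alpha> (emb j (s j)) z = z)"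
    and c: "c \<in> TC" and "z \<in> TB"
  shows "\<alpha> (tup_mul IC NB (\<lambda>j. 1 + s j) c) z = \<alpha> c z"
proof -
  have "\<forall>j\<in>IC. \<exists>w. [(1 + int (EB j) * c j) * w = 1] (mod int (NB j))"
    using EB_unit cong_solve_coprime_int by blast
  then obtain w where w: "\<forall>j\<in>IC. [(1 + int (EB j) * c j) * w j = 1] (mod int (NB j))"
    by (metis bchoice)
  define t where "t = tup_mul IC NB s (\<lambda>j. c j * w j)"
  have t: "t \<in> TC"
    unfolding t_def using tup_mul_closed NB_pos(2) by blast
  have "(\<lambda>i. if i \<in> S then t i else 0) \<in> TC \<and> (\<forall>z\<in>TB. \<alpha> (\<lambda>i. if i \<in> S then t i else 0) z = z)"
    if "S \<subseteq> IC" for S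
  proof -
    have "finite S"
      using that finite_subset by blast
    then show ?thesis
      using that
    proof (induction S rule: finite_induct)
      case empty
      then show ?case
        using \<alpha>_zero_left tup_zero_closed NB_pos by simp
    next
      case (insert j S)
      then have j: "j \<in> IC"
        by blast
      have "(\<lambda>i. if i \<in> insert j S then t i else 0) = tup_circ IC NB EB (emb j (t j)) (\<lambda>i. if i \<in> S then t i else 0)"
        using insert(2,4) t j by (auto simp: tup_circ_def emb_def fun_eq_iff tup_car_eq_mod tup_car_outside)
      moreover have "emb j (t j) \<in> TC"
        using emb_closed NB_pos tup_car_range t j by simp
      ultimately show ?case
        using insert \<alpha>_circ \<alpha>_closed \<alpha>_kernel_emb_multiple[OF j] s j tup_circ_closed NB_pos
        by (simp add: t_def tup_mul_def)
    qed
  qed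
  moreover have "(\<lambda>i. if i \<in> IC then t i else 0) = t"
    using t tup_car_outside by fastforce
  ultimately have "\<alpha> t z = z"
    using \<open>z \<in> TB\<close> by (metis order_refl)
  moreover have "tup_circ IC NB EB c t = tup_mul IC NB (\<lambda>j. 1 + s j) c"
    unfolding t_def using tup_circ_eq_tup_mul[OF w] .
  ultimately show ?thesis
    using \<alpha>_circ c t \<open>z \<in> TB\<close> by metis
qed

lemma br_mul_brace_aut:
  assumes A: "\<forall>j\<in>IA. coprime (uA j) (int (NA j)) \<and> int (NA j) dvd int (EA j) * (uA j - 1)"
    and B: "\<forall>j\<in>IB. coprime (uB j) (int (NB j))"
    and C: "\<forall>j\<in>IC. coprime (uC j) (int (NB j)) \<and> int (NB j) dvd int (EB j) * (uC j - 1)"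
    and kernel: "\<forall>c\<in>TC. \<forall>z\<in>TB. \<alpha> (tup_mul IC NB uC c) z = \<alpha> c z"
  shows "brace_aut (br_mul uA uB uC)"
  unfolding brace_aut_def
proof (intro conjI ballI)
  have "br_mul uA uB uC = map_prod (tup_mul IA NA uA) (map_prod (tup_mul IB NB uB) (tup_mul IC NB uC))"
    by (auto simp: br_mul_def fun_eq_iff)
  then show "bij_betw (br_mul uA uB uC) Car Car"
    unfolding br_car_def using A B C NA_pos NB_pos
    by (simp add: bij_betw_map_prod bij_betw_tup_mul)
next
  fix x y assume "x \<in> Car" "y \<in> Car"
  then show "br_mul uA uB uC (add x y) = add (br_mul uA uB uC x) (br_mul uA uB uC y)"
    by (elim Car_cases) (simp add: tup_mul_add)
next
  fix x y assume "x \<in> Car" "y \<in> Car"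
  then show "br_mul uA uB uC (circ x y) = circ (br_mul uA uB uC x) (br_mul uA uB uC y)"
  proof (elim Car_cases)
    fix xa xb xc ya yb yc
    assume h: "x = (xa, xb, xc)" "xa \<in> TA" "xb \<in> TB" "xc \<in> TC" "y = (ya, yb, yc)" "ya \<in> TA" "yb \<in> TB" "yc \<in> TC"
    have "tup_mul IB NB uB (\<alpha> xc yb) = \<alpha> (tup_mul IC NB uC xc) (tup_mul IB NB uB yb)"
      using \<alpha>_tup_mul kernel tup_mul_closed NB_pos h by simp
    then show ?thesis
      using h A C by (simp add: tup_mul_add tup_mul_circ)
  qed
qed

lemma socle_factors_imp_cycle_set_iso:
  assumes g: "(a, b, c) \<in> Car" and g': "(a', b', c') \<in> Car"
    and tcb1: "transitive_cycle_base Car add neg br_zero circ T1" "(a, b, c) \<in> T1"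
    and tcb2: "transitive_cycle_base Car add neg br_zero circ T2" "(a', b', c') \<in> T2"
    and HA: "\<forall>j\<in>IA. \<exists>s\<in>soc1 (NA j) (EA j). \<exists>a''\<in>{0..<int (NA j)}.
           a' j = ((1 + s) * (1 + int (EA j) * a'') * a j) mod int (NA j)"
    and HC: "\<forall>j\<in>IC. \<exists>s\<in>soc1 (NB j) (EB j). \<exists>a''\<in>{0..<int (NB j)}. (\<forall>z\<in>TB. \<alpha> (emb j s) z = z) \<and>
           c' j = ((1 + s) * (1 + int (EB j) * a'') * c j) mod int (NB j)"
  shows "cycle_set_iso Car (cyc (a, b, c)) (cyc (a', b', c'))"
proof -
  obtain sA aA where A: "\<forall>j\<in>IA. sA j \<in> soc1 (NA j) (EA j) \<and> aA j \<in> {0..<int (NA j)} \<and>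
      a' j = ((1 + sA j) * (1 + int (EA j) * aA j) * a j) mod int (NA j)"
    using bchoice[OF HA[unfolded Bex_def]] bchoice[of IA] by metis
  obtain sC aC where C: "\<forall>j\<in>IC. sC j \<in> soc1 (NB j) (EB j) \<and> aC j \<in> {0..<int (NB j)} \<and>
      (\<forall>z\<in>TB. \<alpha> (emb j (sC j)) z = z) \<and> c' j = ((1 + sC j) * (1 + int (EB j) * aC j) * c j) mod int (NB j)"
    using bchoice[OF HC[unfolded Bex_def]] bchoice[of IC] by metis
  define za where "za i = (if i \<in> IA then aA i else 0)" for i
  define zc where "zc i = (if i \<in> IC then aC i else 0)" for i
  have z_Car: "(za, \<lambda>_. 0, zc) \<in> Car"
    using A C tup_zero_closed NB_pos unfolding za_def zc_def by (auto simp: tup_car_def)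
  have h_eq: "lmap (za, \<lambda>_. 0, zc) (a, b, c)
      = (tup_mul IA NA (\<lambda>i. 1 + int (EA i) * za i) a, \<alpha> zc b, tup_mul IC NB (\<lambda>i. 1 + int (EB i) * zc i) c)"
    using lmap_eq z_Car g by blast
  have "lmap (za, \<lambda>_. 0, zc) (a, b, c) \<in> T1"
    using transitive_cycle_base_orbit[OF tcb1] z_Car by blast
  then have "\<forall>j\<in>IB. coprime (\<alpha> zc b j) (int (NB j))"
    using transitive_cycle_base_units(2)[OF tcb1(1)] unfolding h_eq by blast
  moreover have "\<alpha> zc b \<in> TB" "b' \<in> TB"
    using \<alpha>_closed z_Car g g' by simp_all
  ultimately obtain uB where uB: "\<forall>j\<in>IB. coprime (uB j) (int (NB j))" "tup_mul IB NB uB (\<alpha> zc b) = b'"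
    using tup_mul_units_transitive transitive_cycle_base_units(2)[OF tcb2] by metis
  have units_A: "\<forall>j\<in>IA. coprime (1 + sA j) (int (NA j)) \<and> int (NA j) dvd int (EA j) * (1 + sA j - 1)"
    using A transitive_cycle_base_units(1)[OF tcb2] coprime_mod_mult_left soc1_iff NA_gt1
    by (metis add_diff_cancel_left' mult.assoc)
  have units_C: "\<forall>j\<in>IC. coprime (1 + sC j) (int (NB j)) \<and> int (NB j) dvd int (EB j) * (1 + sC j - 1)"
    using C transitive_cycle_base_units(3)[OF tcb2] coprime_mod_mult_left soc1_iff NB_gt1_C
    by (metis add_diff_cancel_left' mult.assoc)
  have kernel: "\<forall>c\<in>TC. \<forall>z\<in>TB. \<alpha> (tup_mul IC NB (\<lambda>j. 1 + sC j) c) z = \<alpha> c z"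
    using \<alpha>_socle_scale C by blast
  have aut: "brace_aut (br_mul (\<lambda>j. 1 + sA j) uB (\<lambda>j. 1 + sC j))"
    by (rule br_mul_brace_aut[OF units_A uB(1) units_C kernel])
  have "tup_mul IA NA (\<lambda>j. 1 + sA j) (tup_mul IA NA (\<lambda>i. 1 + int (EA i) * za i) a) = a'"
    using g' A unfolding za_def by (intro tup_mul_factorization) auto
  moreover have "tup_mul IC NB (\<lambda>j. 1 + sC j) (tup_mul IC NB (\<lambda>i. 1 + int (EB i) * zc i) c) = c'"
    using g' C unfolding zc_def by (intro tup_mul_factorization) auto
  ultimately have "br_mul (\<lambda>j. 1 + sA j) uB (\<lambda>j. 1 + sC j) (lmap (za, \<lambda>_. 0, zc) (a, b, c)) = (a', b', c')"
    using uB(2) h_eq by simp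
  then show ?thesis
    using cycle_set_iso_brace_aut_lmap[OF aut z_Car g] by simp
qed

end

section \<open>Prime-power moduli\<close>

lemma coprime_one_plus_prime_power:
  assumes "prime (q::nat)" "1 \<le> t"
  shows "coprime (1 + int (q ^ t) * z) (int (q ^ g))"
proof -
  have "coprime (1 + int (q ^ t) * z) (int q)"
  proof (rule coprimeI)
    fix d assume d: "d dvd 1 + int (q ^ t) * z" "d dvd int q"
    then have "d dvd int (q ^ t) * z"
      using assms(2) by (metis dvd_mult2 dvd_power dvd_trans of_nat_power not_one_le_zero le_0_eq
          neq0_conv)
    then show "is_unit d"
      using d(1) by (metis dvd_add_right_iff add.commute)
  qed
  then show ?thesis
    by simp
qed

lemma brace_decomposition_prime_powers:
  fixes q p \<gamma> \<beta> tA tB :: "nat \<Rightarrow> nat"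
  assumes "m \<le> r"
    and q_prime: "\<forall>i\<in>{1..v}. prime (q i)" and p_prime: "\<forall>j\<in>{1..r}. prime (p j)"
    and q_inj: "inj_on q {1..v}" and p_mono: "\<forall>i\<in>{1..r}. \<forall>j\<in>{1..r}. i < j \<longrightarrow> p i < p j"
    and qp_disj: "q ` {1..v} \<inter> p ` {1..r} = {}"
    and tA: "\<forall>i\<in>{1..v}. 1 \<le> tA i \<and> tA i \<le> \<gamma> i" and tB: "\<forall>j\<in>{1..m}. 1 \<le> tB j \<and> tB j \<le> \<beta> j"
    and \<beta>_pos: "\<forall>j\<in>{m+1..r}. 1 \<le> \<beta> j"
    and "\<forall>x\<in>tup_car {1..m} (\<lambda>j. p j ^ \<beta> j). add_aut {m+1..r} (\<lambda>j. p j ^ \<beta> j) (\<alpha> x)"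
    and "\<forall>x\<in>tup_car {1..m} (\<lambda>j. p j ^ \<beta> j). \<forall>y\<in>tup_car {1..m} (\<lambda>j. p j ^ \<beta> j).
           \<forall>z\<in>tup_car {m+1..r} (\<lambda>j. p j ^ \<beta> j).
           \<alpha> (tup_circ {1..m} (\<lambda>j. p j ^ \<beta> j) (\<lambda>j. p j ^ tB j) x y) z = \<alpha> x (\<alpha> y z)"
  shows "brace_decomposition v m r (\<lambda>i. q i ^ \<gamma> i) (\<lambda>i. q i ^ tA i) (\<lambda>j. p j ^ \<beta> j) (\<lambda>j. p j ^ tB j) \<alpha>"
proof
  have \<beta>: "1 \<le> \<beta> j" if "j \<in> {1..r}" for j
  proof (cases "j \<le> m")
    case True
    then have "j \<in> {1..m}"
      using that by simp
    then show ?thesis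
      using bspec[OF tB] by fastforce
  next
    case False
    then have "j \<in> {m+1..r}"
      using that by simp
    then show ?thesis
      using bspec[OF \<beta>_pos] by blast
  qed
  show "\<forall>i\<in>{1..v}. 1 < q i ^ \<gamma> i"
  proof
    fix i assume i: "i \<in> {1..v}"
    have "1 < q i" "1 \<le> \<gamma> i"
      using bspec[OF q_prime i] bspec[OF tA i] prime_gt_1_nat by auto
    then show "1 < q i ^ \<gamma> i"
      by (intro one_less_power) auto
  qed
  show "\<forall>j\<in>{1..r}. 1 < p j ^ \<beta> j"
  proof
    fix j assume j: "j \<in> {1..r}"
    have "1 < p j" "1 \<le> \<beta> j"
      using bspec[OF p_prime j] \<beta>[OF j] prime_gt_1_nat by auto
    then show "1 < p j ^ \<beta> j"
      by (intro one_less_power) auto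
  qed
  show "\<forall>i\<in>{1..v}. \<forall>z. coprime (1 + int (q i ^ tA i) * z) (int (q i ^ \<gamma> i))"
    using coprime_one_plus_prime_power q_prime tA by blast
  show "\<forall>j\<in>{1..m}. \<forall>z. coprime (1 + int (p j ^ tB j) * z) (int (p j ^ \<beta> j))"
    using coprime_one_plus_prime_power p_prime tB \<open>m \<le> r\<close> by force
  show "\<forall>i\<in>{1..v}. \<forall>k\<in>{1..v}. i \<noteq> k \<longrightarrow> coprime (q i ^ \<gamma> i) (q k ^ \<gamma> k)"
    using q_prime q_inj primes_coprime unfolding inj_on_def by (metis coprime_power_left_iff coprime_power_right_iff)
  show "\<forall>i\<in>{1..r}. \<forall>k\<in>{1..r}. i \<noteq> k \<longrightarrow> coprime (p i ^ \<beta> i) (p k ^ \<beta> k)"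
    using p_prime p_mono primes_coprime
    by (metis coprime_power_left_iff coprime_power_right_iff less_irrefl nat_neq_iff)
  show "\<forall>i\<in>{1..v}. \<forall>k\<in>{1..r}. coprime (q i ^ \<gamma> i) (p k ^ \<beta> k)"
    using q_prime p_prime qp_disj primes_coprime
    by (metis coprime_power_left_iff coprime_power_right_iff disjoint_iff imageI)
qed (use assms in auto)

theorem mainTheorem13:
  fixes v m r :: nat
    and q p \<gamma> \<beta> tA tB d f :: "nat \<Rightarrow> nat"
    and \<alpha> :: "(nat \<Rightarrow> int) \<Rightarrow> (nat \<Rightarrow> int) \<Rightarrow> (nat \<Rightarrow> int)"
    and a b c a' b' c' :: "nat \<Rightarrow> int"
    and NA EA NB EB :: "nat \<Rightarrow> nat"
    and Car :: "belt set" and add :: "belt \<Rightarrow> belt \<Rightarrow> belt" and neg :: "belt \<Rightarrow> belt"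
    and circ :: "belt \<Rightarrow> belt \<Rightarrow> belt"
  defines "NA \<equiv> (\<lambda>i. q i ^ \<gamma> i)" and "EA \<equiv> (\<lambda>i. q i ^ tA i)"
    and "NB \<equiv> (\<lambda>j. p j ^ \<beta> j)" and "EB \<equiv> (\<lambda>j. p j ^ tB j)"
    and "Car \<equiv> br_car v m r NA NB" and "add \<equiv> br_add v m r NA NB"
    and "neg \<equiv> br_neg v m r NA NB" and "circ \<equiv> br_circ v m r NA EA NB EB \<alpha>"
  assumes mr: "m \<le> r"
    and q_prime: "\<forall>i\<in>{1..v}. prime (q i) \<and> odd (q i)"
    and p_prime: "\<forall>j\<in>{1..r}. prime (p j) \<and> odd (p j)"
    and q_inj: "inj_on q {1..v}"
    and p_mono: "\<forall>i\<in>{1..r}. \<forall>j\<in>{1..r}. i < j \<longrightarrow> p i < p j"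
    and qp_disj: "q ` {1..v} \<inter> p ` {1..r} = {}"
    and tA_rng: "\<forall>i\<in>{1..v}. 1 \<le> tA i \<and> tA i \<le> \<gamma> i"
    and tB_rng: "\<forall>j\<in>{1..m}. 1 \<le> tB j \<and> tB j \<le> \<beta> j"
    and \<beta>_pos: "\<forall>j\<in>{m+1..r}. 1 \<le> \<beta> j"
    and \<alpha>_aut: "\<forall>x\<in>tup_car {1..m} NB. add_aut {m+1..r} NB (\<alpha> x)"
    and \<alpha>_hom: "\<forall>x\<in>tup_car {1..m} NB. \<forall>y\<in>tup_car {1..m} NB. \<forall>z\<in>tup_car {m+1..r} NB.
                  \<alpha> (tup_circ {1..m} NB EB x y) z = \<alpha> x (\<alpha> y z)"
    and \<alpha>_nontriv_dom: "\<forall>i\<in>{1..m}. \<exists>s\<in>{0..<int (NB i)}. \<exists>z\<in>tup_car {m+1..r} NB.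
                  \<alpha> (emb i s) z \<noteq> z"
    and \<alpha>_nontriv_img: "\<forall>i\<in>{m+1..r}. \<exists>x\<in>tup_car {1..m} NB. \<exists>s\<in>{0..<int (NB i)}.
                  \<alpha> x (emb i s) \<noteq> emb i s"
    and d_def: "\<forall>j\<in>{1..v}. card (soc1 (NA j) (EA j)) = q j ^ d j"
    and f_def: "\<forall>j\<in>{1..m}. card (soc1 (NB j) (EB j)) = p j ^ f j"
    and g1: "(a, b, c) \<in> Car"
    and g2: "(a', b', c') \<in> Car"
    and tcb1: "\<exists>T. transitive_cycle_base Car add neg br_zero circ T \<and> (a, b, c) \<in> T"
    and tcb2: "\<exists>T. transitive_cycle_base Car add neg br_zero circ T \<and> (a', b', c') \<in> T"
  shows "cycle_set_iso Car (uc_cycle_op Car add neg br_zero circ (a, b, c))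
                           (uc_cycle_op Car add neg br_zero circ (a', b', c'))
     \<longleftrightarrow>
     (\<forall>j\<in>{1..v}. \<exists>s\<in>soc1 (NA j) (EA j). \<exists>a''\<in>{0..<int (NA j)}.
        a' j = ((1 + s) * (1 + int (q j ^ d j) * a'') * a j) mod int (NA j))
   \<and> (\<forall>j\<in>{1..m}. \<exists>s\<in>soc1 (NB j) (EB j). \<exists>a''\<in>{0..<int (NB j)}.
        (\<forall>z\<in>tup_car {m+1..r} NB. \<alpha> (emb j s) z = z) \<and>
        c' j = ((1 + s) * (1 + int (p j ^ f j) * a'') * c j) mod int (NB j))"
proof -
  interpret brace_decomposition v m r NA EA NB EB \<alpha>
    using brace_decomposition_prime_powers mr q_prime p_prime q_inj p_mono qp_disj tA_rng tB_rng \<beta>_pos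
      \<alpha>_aut \<alpha>_hom unfolding NA_def EA_def NB_def EB_def by blast
  have "\<forall>j\<in>{1..v}. q j ^ d j = EA j"
    using d_def card_soc1_prime_power q_prime tA_rng prime_gt_1_nat unfolding NA_def EA_def by simp
  moreover have "\<forall>j\<in>{1..m}. p j ^ f j = EB j"
    using f_def card_soc1_prime_power p_prime tB_rng prime_gt_1_nat mr unfolding NB_def EB_def by force
  moreover obtain T1 T2 where T: "transitive_cycle_base Car add neg br_zero circ T1" "(a, b, c) \<in> T1"
    "transitive_cycle_base Car add neg br_zero circ T2" "(a', b', c') \<in> T2"
    using tcb1 tcb2 by blast
  note defs = Car_def add_def neg_def circ_def
  ultimately show ?thesis
    using cycle_set_iso_imp_socle_factors[OF g1[unfolded defs] g2[unfolded defs] T(1,2)[unfolded defs]]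
      socle_factors_imp_cycle_set_iso[OF g1[unfolded defs] g2[unfolded defs] T[unfolded defs]]
    unfolding defs by auto
qed

end
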